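(* Let $n\ge 2$ and $m\ge 8$, and let $D$ be a pebbling distribution on the Jahangir graph $J_{n,m}$ such that $D(P_0)=0$ (no pebbles on $v_0,v_1,\dots,v_n$) and none of $u$, $v_0$, $v_n$ is reachable from $D$. Then $|D|\le\alpha$, where $$\alpha=\begin{cases}\frac{m}{2}\big(f(C_n)+f(C_{n+2})-2\big)-f(C_{n+2})+1, & m \text{ even},\\[2pt] \frac{m-1}{2}\big(f(C_n)+f(C_{n+2})-2\big)+f(C_{n+1})-f(C_{n+2}), & m\text{ odd}.\end{cases}$$ Moreover this bound is tight: there is a distribution $D^*$ on $J_{n,m}$ with $D^*(P_0)=0$, none of $u,v_0,v_n$ reachable, and $|D^*|=\alpha$.
   Context: The Jahangir graph $J_{n,m}$ ($m\ge3$) consists of the cycle $C_{nm}=v_0v_1\cdots v_{nm-1}v_0$ together with an extra vertex $u$ adjacent to $v_{ni}$ for $0\le i\le m-1$. For $0\le i\le m-1$, $P_i$ denotes the path $v_{ni}v_{ni+1}\cdots v_{n(i+1)}$ (indices mod $nm$). A pebbling distribution $D$ assigns a nonnegative integer number of pebbles to each vertex; $|D|$ is the total and $D(A)$ the total on a set $A$. A pebbling move removes two pebbles from a vertex and places one on an adjacent vertex; a vertex is reachable from $D$ if some sequence of pebbling moves in $J_{n,m}$ puts a pebble on it. $f(C_k)$ is the pebbling number of the $k$-cycle: $f(C_{2k'})=2^{k'}$, $f(C_{2k'+1})=2\lfloor 2^{k'+1}/3\rfloor+1$ (with these formulas used as convention for $k<3$, e.g. $f(C_2)=2$). *)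

theory Defs
  imports Main
begin

datatype jvert = U | V nat

definition jvertices :: "nat \<Rightarrow> nat \<Rightarrow> jvert set" where
  "jvertices n m = insert U (V ` {..<n*m})"

definition jadj :: "nat \<Rightarrow> nat \<Rightarrow> jvert \<Rightarrow> jvert \<Rightarrow> bool" where
  "jadj n m x y = (case (x, y) of
      (V i, V j) \<Rightarrow> i < n*m \<and> j < n*m \<and> i \<noteq> j \<and> (j = (i + 1) mod (n*m) \<or> i = (j + 1) mod (n*m))
    | (U, V j) \<Rightarrow> j < n*m \<and> n dvd j
    | (V i, U) \<Rightarrow> i < n*m \<and> n dvd i
    | (U, U) \<Rightarrow> False)"

definition is_distribution :: "nat \<Rightarrow> nat \<Rightarrow> (jvert \<Rightarrow> nat) \<Rightarrow> bool" where
  "is_distribution n m D = (\<forall>x. x \<notin> jvertices n m \<longrightarrow> D x = 0)"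

definition dsize :: "nat \<Rightarrow> nat \<Rightarrow> (jvert \<Rightarrow> nat) \<Rightarrow> nat" where
  "dsize n m D = (\<Sum>x\<in>jvertices n m. D x)"

definition pmove :: "nat \<Rightarrow> nat \<Rightarrow> (jvert \<Rightarrow> nat) \<Rightarrow> (jvert \<Rightarrow> nat) \<Rightarrow> bool" where
  "pmove n m D D' = (\<exists>x y. jadj n m x y \<and> D x \<ge> 2 \<and> D' = (D(x := D x - 2))(y := D y + 1))"

definition reachable :: "nat \<Rightarrow> nat \<Rightarrow> (jvert \<Rightarrow> nat) \<Rightarrow> jvert \<Rightarrow> bool" where
  "reachable n m D t = (\<exists>D'. (pmove n m)\<^sup>*\<^sup>* D D' \<and> D' t \<ge> 1)"

text \<open>Pebbling number of the k-cycle (formula, also used as convention for k < 3).\<close>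
definition fC :: "nat \<Rightarrow> nat" where
  "fC k = (if even k then 2 ^ (k div 2) else 2 * (2 ^ (k div 2 + 1) div 3) + 1)"

definition alpha :: "nat \<Rightarrow> nat \<Rightarrow> int" where
  "alpha n m = (if even m
     then int (m div 2) * (int (fC n) + int (fC (n+2)) - 2) - int (fC (n+2)) + 1
     else int ((m - 1) div 2) * (int (fC n) + int (fC (n+2)) - 2) + int (fC (n+1)) - int (fC (n+2)))"

definition good_dist :: "nat \<Rightarrow> nat \<Rightarrow> (jvert \<Rightarrow> nat) \<Rightarrow> bool" where
  "good_dist n m D = (is_distribution n m D \<and> (\<forall>i\<le>n. D (V i) = 0)
     \<and> \<not> reachable n m D U \<and> \<not> reachable n m D (V 0) \<and> \<not> reachable n m D (V n))"

end

theory Submission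
  imports Defs
begin

text \<open>
  Read the cycle vertices \<open>v\<^bsub>n+1\<^esub>, \<dots>, v\<^bsub>nm-1\<^esub>\<close> as a path, and let
  \<open>pile_up g a i\<close> (resp. \<open>pile_down g b i\<close>) be the number of pebbles that arrive on
  \<open>v\<^sub>i\<close> when all pebbles of \<open>v\<^bsub>a+1\<^esub>, \<dots>, v\<^sub>i\<close> are greedily pushed forward
  (resp. those of \<open>v\<^sub>i, \<dots>, v\<^bsub>b-1\<^esub>\<close> backward). A distribution that is empty on
  \<open>P\<^sub>0\<close> leaves \<open>u\<close>, \<open>v\<^sub>0\<close> and \<open>v\<^sub>n\<close> unreachable iff it is stuck: every hub
  \<open>v\<^bsub>jn\<^esub>\<close> together with the piles arriving from its two neighbouring paths yields at
  most one pebble, and at most one pebble arrives at \<open>v\<^bsub>nm-1\<^esub>\<close> and at \<open>v\<^bsub>n+1\<^esub>\<close>.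
  Pebbling moves never increase greedy piles, so being stuck is invariant; conversely, greedy
  move sequences witness reachability.

  Being stuck is a condition on single segments: the inner path of \<open>P\<^sub>j\<close> passes
  \<open>c\<^sub>L, c\<^sub>R \<le> 1\<close> pebbles to its two hubs, and each hub is shared with the neighbouring
  segment. Weighting every pebble by its distance from both ends, as for the pebbling number of
  cycles, bounds the inner path by \<open>f(C\<^bsub>n+c\<^sub>L+c\<^sub>R\<^esub>) - 1\<close> pebbles. As \<open>f\<close>
  grows more from \<open>n+1\<close> to \<open>n+2\<close> than from \<open>n\<close> to \<open>n+1\<close>, the total is largest when
  every other segment has \<open>c\<^sub>L + c\<^sub>R = 2\<close>, which gives \<open>\<alpha>\<close>; one peak of pebbles in
  the middle of each segment attains it.
\<close>

section \<open>Greedy piles on a path\<close>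

function pile_up :: "(nat \<Rightarrow> nat) \<Rightarrow> nat \<Rightarrow> nat \<Rightarrow> nat" where
  "pile_up g a i = (if i \<le> a then 0 else g i + pile_up g a (i - 1) div 2)"
  by auto
termination by (relation "measure (\<lambda>(g, a, i). i)") auto

function pile_down :: "(nat \<Rightarrow> nat) \<Rightarrow> nat \<Rightarrow> nat \<Rightarrow> nat" where
  "pile_down g b i = (if b \<le> i then 0 else g i + pile_down g b (i + 1) div 2)"
  by auto
termination by (relation "measure (\<lambda>(g, b, i). b - i)") auto

declare pile_up.simps[simp del] pile_down.simps[simp del]

lemma pile_up_trivial[simp]: "i \<le> a \<Longrightarrow> pile_up g a i = 0"
  by (simp add: pile_up.simps)

lemma pile_up_Suc: "a \<le> i \<Longrightarrow> pile_up g a (Suc i) = g (Suc i) + pile_up g a i div 2"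
  by (subst pile_up.simps) simp

lemma pile_down_trivial[simp]: "b \<le> i \<Longrightarrow> pile_down g b i = 0"
  by (simp add: pile_down.simps)

lemma pile_down_step: "i < b \<Longrightarrow> pile_down g b i = g i + pile_down g b (Suc i) div 2"
  by (subst pile_down.simps) simp

lemma pile_up_ge: "a < i \<Longrightarrow> g i \<le> pile_up g a i"
  using pile_up_Suc[of a "i - 1" g] by (cases i) auto

lemma pile_down_ge: "i < b \<Longrightarrow> g i \<le> pile_down g b i"
  using pile_down_step[of i b g] by simp

lemma pile_up_mono_beyond:
  assumes "j \<le> i" "a \<le> j" "\<forall>p. j < p \<and> p \<le> i \<longrightarrow> g p \<le> g' p"
    and "pile_up g a j \<le> pile_up g' a j"
  shows "pile_up g a i \<le> pile_up g' a i"
  using assms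
proof (induction i)
  case (Suc i)
  show ?case
  proof (cases "j = Suc i")
    case False
    then have "pile_up g a i div 2 \<le> pile_up g' a i div 2"
      using Suc by (simp add: div_le_mono)
    moreover have "g (Suc i) \<le> g' (Suc i)" "a \<le> i" using Suc.prems False by auto
    ultimately show ?thesis using pile_up_Suc[of a i g] pile_up_Suc[of a i g'] by simp
  qed (use Suc in simp)
qed simp

lemma pile_down_mono_beyond:
  assumes "i \<le> j" "\<forall>p. i \<le> p \<and> p < j \<longrightarrow> g p \<le> g' p"
    and "pile_down g b j \<le> pile_down g' b j"
  shows "pile_down g b i \<le> pile_down g' b i"
  using assms
proof (induction "j - i" arbitrary: i)
  case (Suc k)
  then have "pile_down g b (Suc i) div 2 \<le> pile_down g' b (Suc i) div 2"
    by (simp add: div_le_mono)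
  moreover have "g i \<le> g' i" using Suc by auto
  ultimately show ?case using pile_down_step[of i b g] pile_down_step[of i b g']
    by (cases "b \<le> i") simp_all
qed simp

lemma pile_up_mono: "\<forall>p. a < p \<and> p \<le> i \<longrightarrow> g p \<le> g' p \<Longrightarrow> pile_up g a i \<le> pile_up g' a i"
  by (cases "i \<le> a") (auto intro: pile_up_mono_beyond[of a i a])

lemma pile_down_mono: "\<forall>p. i \<le> p \<and> p < b \<longrightarrow> g p \<le> g' p \<Longrightarrow> pile_down g b i \<le> pile_down g' b i"
  by (cases "b \<le> i") (auto intro: pile_down_mono_beyond[of i b])

lemma pile_up_cong: "\<forall>p. a < p \<and> p \<le> i \<longrightarrow> g p = g' p \<Longrightarrow> pile_up g a i = pile_up g' a i"
  by (intro antisym pile_up_mono) auto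

lemma pile_down_cong: "\<forall>p. i \<le> p \<and> p < b \<longrightarrow> g p = g' p \<Longrightarrow> pile_down g b i = pile_down g' b i"
  by (intro antisym pile_down_mono) auto

lemma pile_up_eq_beyond:
  assumes "a \<le> j" "j \<le> i" "\<forall>p. j < p \<and> p \<le> i \<longrightarrow> g' p = g p"
    and "pile_up g' a j = pile_up g a j"
  shows "pile_up g' a i = pile_up g a i"
proof (rule antisym)
  show "pile_up g' a i \<le> pile_up g a i" by (rule pile_up_mono_beyond[of j]) (use assms in auto)
  show "pile_up g a i \<le> pile_up g' a i" by (rule pile_up_mono_beyond[of j]) (use assms in auto)
qed

lemma pile_down_eq_beyond:
  assumes "i \<le> j" "\<forall>p. i \<le> p \<and> p < j \<longrightarrow> g' p = g p"
    and "pile_down g' b j = pile_down g b j"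
  shows "pile_down g' b i = pile_down g b i"
proof (rule antisym)
  show "pile_down g' b i \<le> pile_down g b i" by (rule pile_down_mono_beyond[of i j]) (use assms in auto)
  show "pile_down g b i \<le> pile_down g' b i" by (rule pile_down_mono_beyond[of i j]) (use assms in auto)
qed

text \<open>A pile of at most one pebble contributes nothing further, so the greedy process restarts.\<close>

lemma pile_up_restart:
  "a \<le> c \<Longrightarrow> c < i \<Longrightarrow> pile_up g a c \<le> 1 \<Longrightarrow> pile_up g a i = pile_up g c i"
proof (induction i)
  case (Suc i)
  show ?case
  proof (cases "c < i")
    case True
    then show ?thesis using Suc by (simp add: pile_up_Suc)
  next
    case False
    then have "i = c" using Suc.prems by simp
    then show ?thesis using Suc.prems by (simp add: pile_up_Suc)
  qed
qed simp

lemma pile_down_restart: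
  "c \<le> b \<Longrightarrow> i < c \<Longrightarrow> pile_down g b c \<le> 1 \<Longrightarrow> pile_down g b i = pile_down g c i"
proof (induction g c i rule: pile_down.induct)
  case (1 g c i)
  show ?case
  proof (cases "Suc i < c")
    case True
    then show ?thesis using 1 pile_down_step[of i b g] pile_down_step[of i c g] by simp
  next
    case False
    then have "c = Suc i" using 1 by simp
    then show ?thesis using 1 by (simp add: pile_down_step)
  qed
qed

lemma pile_up_shift: "pile_up g s (s + q) = pile_up (\<lambda>q. g (s + q)) 0 q"
proof (induction q)
  case (Suc q)
  then show ?case using pile_up_Suc[of s "s + q" g] pile_up_Suc[of 0 q] by simp
qed simp

lemma pile_down_shift: "pile_down g (s + b) (s + i) = pile_down (\<lambda>q. g (s + q)) b i"
proof (induction "\<lambda>q. g (s + q)" b i rule: pile_down.induct)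
  case (1 b i)
  then show ?case using pile_down_step[of "s + i" "s + b" g] pile_down_step[of i b]
    by (cases "b \<le> i") simp_all
qed

lemma pile_up_over_zeros:
  "a \<le> i \<Longrightarrow> \<forall>p. i < p \<and> p \<le> i + r \<longrightarrow> g p = 0 \<Longrightarrow> pile_up g a (i + r) = pile_up g a i div 2 ^ r"
proof (induction r)
  case (Suc r)
  then have "pile_up g a (i + Suc r) = pile_up g a i div 2 ^ r div 2"
    using pile_up_Suc[of a "i + r" g] by simp
  then show ?case by (simp only: div_mult2_eq[symmetric] mult.commute power_Suc)
qed simp

lemma pile_down_over_zeros:
  "i + r \<le> b \<Longrightarrow> \<forall>p. i \<le> p \<and> p < i + r \<longrightarrow> g p = 0 \<Longrightarrow>
    pile_down g b i = pile_down g b (i + r) div 2 ^ r"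
proof (induction r arbitrary: i)
  case (Suc r)
  then have "pile_down g b i = pile_down g b (Suc i + r) div 2 ^ r div 2"
    using pile_down_step[of i b g] Suc.IH[of "Suc i"] by simp
  then show ?case by (simp only: div_mult2_eq[symmetric] mult.commute power_Suc add_Suc_shift)
qed simp

lemma pile_up_eq_0: "\<forall>p. a < p \<and> p \<le> i \<longrightarrow> g p = 0 \<Longrightarrow> pile_up g a i = 0"
proof (induction i)
  case (Suc i)
  then show ?case by (cases "Suc i \<le> a") (auto simp: pile_up_Suc)
qed simp

lemma pile_down_eq_0: "\<forall>p. i \<le> p \<and> p < b \<longrightarrow> g p = 0 \<Longrightarrow> pile_down g b i = 0"
proof (induction g b i rule: pile_down.induct)
  case (1 g b i)
  then show ?case by (cases "b \<le> i") (auto simp: pile_down_step)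
qed

text \<open>Up to rounding, a pebble at distance \<open>d\<close> from the end of a pile adds \<open>2\<^sup>-\<^sup>d\<close> to it.\<close>

lemma pile_up_weighted_sum:
  "(\<Sum>q\<in>{1..k}. g (a + q) * 2 ^ q) + 1 \<le> 2 ^ k * (pile_up g a (a + k) + 1)"
proof (induction k)
  case (Suc k)
  let ?p = "pile_up g a (a + k)"
  have "(\<Sum>q\<in>{1..Suc k}. g (a + q) * 2 ^ q) + 1
      \<le> 2 ^ k * (?p + 1) + g (a + Suc k) * 2 ^ Suc k"
    using Suc by simp
  also have "\<dots> \<le> 2 ^ k * (2 * (?p div 2) + 2) + g (a + Suc k) * 2 ^ Suc k"
    by (intro add_right_mono mult_left_mono) linarith+
  also have "\<dots> = 2 ^ Suc k * (pile_up g a (a + Suc k) + 1)"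
    using pile_up_Suc[of a "a + k" g] by (simp add: algebra_simps)
  finally show ?case .
qed simp

lemma pile_down_weighted_sum:
  "k \<le> b \<Longrightarrow> (\<Sum>q\<in>{1..k}. g (b - q) * 2 ^ q) + 1 \<le> 2 ^ k * (pile_down g b (b - k) + 1)"
proof (induction k)
  case (Suc k)
  let ?p = "pile_down g b (b - k)"
  have "(\<Sum>q\<in>{1..Suc k}. g (b - q) * 2 ^ q) + 1
      \<le> 2 ^ k * (?p + 1) + g (b - Suc k) * 2 ^ Suc k"
    using Suc by simp
  also have "\<dots> \<le> 2 ^ k * (2 * (?p div 2) + 2) + g (b - Suc k) * 2 ^ Suc k"
    by (intro add_right_mono mult_left_mono) linarith+
  also have "\<dots> = 2 ^ Suc k * (pile_down g b (b - Suc k) + 1)"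
    using pile_down_step[of "b - Suc k" b g] Suc.prems by (simp add: Suc_diff_Suc algebra_simps)
  finally show ?case .
qed simp

section \<open>Pebbling moves along the path never increase piles\<close>

definition hub_pile :: "(nat \<Rightarrow> nat) \<Rightarrow> nat \<Rightarrow> nat \<Rightarrow> nat \<Rightarrow> nat" where
  "hub_pile g a b h = g h + pile_up g a (h - 1) div 2 + pile_down g b (h + 1) div 2"

context
  fixes g g' :: "nat \<Rightarrow> nat" and a b x :: nat
  assumes ax: "a < x" and xb: "Suc x < b"
begin

lemma pile_up_move_up:
  assumes gx: "2 \<le> g x" and g': "g' = g(x := g x - 2, Suc x := g (Suc x) + 1)"
  shows "pile_up g' a i = (if i = x then pile_up g a x - 2 else pile_up g a i)"
proof -
  have below: "pile_up g' a i = pile_up g a i" if "i < x" for i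
    using that g' by (intro pile_up_cong) auto
  obtain x' where x': "x = Suc x'" "a \<le> x'" using ax by (cases x) auto
  have at_x: "pile_up g' a x = pile_up g a x - 2" and x2: "2 \<le> pile_up g a x"
    using pile_up_Suc[of a x' g] pile_up_Suc[of a x' g'] below[of x'] g' gx x'(2) unfolding x'(1)
    by simp_all
  have at_Suc_x: "pile_up g' a (Suc x) = pile_up g a (Suc x)"
    using pile_up_Suc[of a x g] pile_up_Suc[of a x g'] ax at_x x2 g' by simp
  have above: "pile_up g' a i = pile_up g a i" if "Suc x \<le> i" for i
    by (rule pile_up_eq_beyond[of a "Suc x"]) (use that ax g' at_Suc_x in auto)
  show ?thesis using below at_x above by (cases "i < x"; cases "i = x") auto
qed

lemma pile_down_move_up:
  assumes gx: "2 \<le> g x" and g': "g' = g(x := g x - 2, Suc x := g (Suc x) + 1)"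
  shows "Suc (Suc x) \<le> i \<Longrightarrow> pile_down g' b i = pile_down g b i"
    and "pile_down g' b (Suc x) = pile_down g b (Suc x) + 1"
    and "i \<le> x \<Longrightarrow> pile_down g' b i \<le> pile_down g b i"
proof -
  show above: "pile_down g' b i = pile_down g b i" if "Suc (Suc x) \<le> i" for i
    using that g' by (intro pile_down_cong) auto
  show at_Suc_x: "pile_down g' b (Suc x) = pile_down g b (Suc x) + 1"
    using pile_down_step[of "Suc x" b g] pile_down_step[of "Suc x" b g'] xb g' above[of "Suc (Suc x)"]
    by simp
  have at_x: "pile_down g' b x \<le> pile_down g b x"
    using pile_down_step[of x b g] pile_down_step[of x b g'] xb g' gx at_Suc_x by simp
  show "pile_down g' b i \<le> pile_down g b i" if "i \<le> x"
    by (rule pile_down_mono_beyond[of i x]) (use that g' at_x in auto)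
qed

lemma hub_pile_move_up:
  assumes gx: "2 \<le> g x" and g': "g' = g(x := g x - 2, Suc x := g (Suc x) + 1)"
  shows "hub_pile g' a b h \<le> hub_pile g a b h"
proof -
  note up = pile_up_move_up[OF gx g'] and down = pile_down_move_up[OF gx g']
  have x2: "2 \<le> pile_up g a x" using pile_up_ge[OF ax, of g] gx by simp
  consider "h < x" | "h = x" | "h = Suc x" | "Suc x < h" by linarith
  then show ?thesis
  proof cases
    case 1
    then show ?thesis using up[of "h - 1"] down(3)[of "h + 1"] g'
      unfolding hub_pile_def by (simp add: div_le_mono)
  next
    case 2
    have "hub_pile g' a b x = (g x - 2) + pile_up g a (x - 1) div 2 + (pile_down g b (x + 1) + 1) div 2"
      using up[of "x - 1"] down(2) g' ax unfolding hub_pile_def by simp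
    moreover have "hub_pile g a b x = g x + pile_up g a (x - 1) div 2 + pile_down g b (x + 1) div 2"
      by (simp add: hub_pile_def)
    moreover have "(pile_down g b (x + 1) + 1) div 2 \<le> pile_down g b (x + 1) div 2 + 1" by linarith
    ultimately have "hub_pile g' a b x \<le> hub_pile g a b x" using gx by linarith
    with 2 show ?thesis by simp
  next
    case 3
    have "(pile_up g a x - 2) div 2 = pile_up g a x div 2 - 1" using x2 by linarith
    then show ?thesis using 3 up[of x] down(1)[of "x + 2"] g' gx x2 unfolding hub_pile_def by simp
  next
    case 4
    then show ?thesis using up[of "h - 1"] down(1)[of "h + 1"] g' unfolding hub_pile_def by simp
  qed
qed

lemma pile_down_move_down:
  assumes gx: "2 \<le> g (Suc x)" and g': "g' = g(Suc x := g (Suc x) - 2, x := g x + 1)"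
  shows "pile_down g' b i = (if i = Suc x then pile_down g b (Suc x) - 2 else pile_down g b i)"
proof -
  have above: "pile_down g' b i = pile_down g b i" if "Suc (Suc x) \<le> i" for i
    using that g' by (intro pile_down_cong) auto
  have at_Suc_x: "pile_down g' b (Suc x) = pile_down g b (Suc x) - 2"
    and x2: "2 \<le> pile_down g b (Suc x)"
    using pile_down_step[of "Suc x" b g] pile_down_step[of "Suc x" b g'] xb g' gx
      above[of "Suc (Suc x)"] by simp_all
  have at_x: "pile_down g' b x = pile_down g b x"
    using pile_down_step[of x b g] pile_down_step[of x b g'] xb g' at_Suc_x x2 by simp
  have below: "pile_down g' b i = pile_down g b i" if "i \<le> x" for i
    by (rule pile_down_eq_beyond[of i x]) (use that g' at_x in auto)
  show ?thesis using below at_Suc_x above by (cases "i \<le> x"; cases "i = Suc x") auto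
qed

lemma pile_up_move_down:
  assumes gx: "2 \<le> g (Suc x)" and g': "g' = g(Suc x := g (Suc x) - 2, x := g x + 1)"
  shows "i < x \<Longrightarrow> pile_up g' a i = pile_up g a i"
    and "pile_up g' a x = pile_up g a x + 1"
    and "Suc x \<le> i \<Longrightarrow> pile_up g' a i \<le> pile_up g a i"
proof -
  show below: "pile_up g' a i = pile_up g a i" if "i < x" for i
    using that g' by (intro pile_up_cong) auto
  obtain x' where x': "x = Suc x'" "a \<le> x'" using ax by (cases x) auto
  show at_x: "pile_up g' a x = pile_up g a x + 1"
    using pile_up_Suc[of a x' g] pile_up_Suc[of a x' g'] below[of x'] g' x'(2) unfolding x'(1) by simp
  have at_Suc_x: "pile_up g' a (Suc x) \<le> pile_up g a (Suc x)"
    using pile_up_Suc[of a x g] pile_up_Suc[of a x g'] ax g' gx at_x by simp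
  show "pile_up g' a i \<le> pile_up g a i" if "Suc x \<le> i"
    by (rule pile_up_mono_beyond[of "Suc x" i a]) (use that ax g' at_Suc_x in auto)
qed

lemma hub_pile_move_down:
  assumes gx: "2 \<le> g (Suc x)" and g': "g' = g(Suc x := g (Suc x) - 2, x := g x + 1)"
  shows "hub_pile g' a b h \<le> hub_pile g a b h"
proof -
  note down = pile_down_move_down[OF gx g'] and up = pile_up_move_down[OF gx g']
  have "2 \<le> pile_down g b (Suc x)" using pile_down_ge[OF xb, of g] gx by simp
  consider "h < x" | "h = x" | "h = Suc x" | "Suc x < h" by linarith
  then show ?thesis
  proof cases
    case 1
    then show ?thesis using down[of "h + 1"] up(1)[of "h - 1"] g' unfolding hub_pile_def by simp
  next
    case 2
    have "(pile_down g b (x + 1) - 2) div 2 = pile_down g b (x + 1) div 2 - 1"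
      using \<open>2 \<le> pile_down g b (Suc x)\<close> by linarith
    then show ?thesis using 2 down[of "x + 1"] up(1)[of "x - 1"] g' ax gx
        \<open>2 \<le> pile_down g b (Suc x)\<close> unfolding hub_pile_def by simp
  next
    case 3
    have "(pile_up g a x + 1) div 2 \<le> pile_up g a x div 2 + 1" by linarith
    then show ?thesis using 3 down[of "x + 2"] up(2) g' gx unfolding hub_pile_def by simp
  next
    case 4
    then show ?thesis using down[of "h + 1"] up(3)[of "h - 1"] g'
      unfolding hub_pile_def by (simp add: div_le_mono)
  qed
qed

end

section \<open>Stuck distributions\<close>

definition on_cycle :: "(jvert \<Rightarrow> nat) \<Rightarrow> nat \<Rightarrow> nat" where
  "on_cycle D = (\<lambda>i. D (V i))"

definition stuck :: "nat \<Rightarrow> nat \<Rightarrow> (jvert \<Rightarrow> nat) \<Rightarrow> bool" where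
  "stuck n m D \<longleftrightarrow> D U = 0 \<and> (\<forall>i\<le>n. D (V i) = 0) \<and> (\<forall>i\<ge>n * m. D (V i) = 0) \<and>
     (\<forall>h. n < h \<and> h < n * m \<and> n dvd h \<longrightarrow> hub_pile (on_cycle D) n (n * m) h \<le> 1) \<and>
     pile_up (on_cycle D) n (n * m - 1) \<le> 1 \<and> pile_down (on_cycle D) (n * m) (n + 1) \<le> 1"

lemma stuck_if_piles_le:
  assumes "stuck n m D" "D' U = 0" "\<forall>i\<le>n. D' (V i) = 0" "\<forall>i\<ge>n * m. D' (V i) = 0"
    and "\<forall>h. n < h \<and> h < n * m \<longrightarrow> hub_pile (on_cycle D') n (n * m) h \<le> hub_pile (on_cycle D) n (n * m) h"
    and "pile_up (on_cycle D') n (n * m - 1) \<le> pile_up (on_cycle D) n (n * m - 1)"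
    and "pile_down (on_cycle D') (n * m) (n + 1) \<le> pile_down (on_cycle D) (n * m) (n + 1)"
  shows "stuck n m D'"
  using assms unfolding stuck_def by (meson le_trans)

lemma jadj_V_cases[consumes 2, case_names hub up wrap down]:
  assumes "jadj n m (V i) y" "0 < i"
  obtains "y = U" "n dvd i" "i < n * m"
    | "y = V (Suc i)" "Suc i < n * m"
    | "y = V 0" "Suc i = n * m"
    | "y = V (i - 1)" "i < n * m"
proof (cases y)
  case U
  then show ?thesis using assms that(1) unfolding jadj_def by simp
next
  case (V k)
  then have kN: "k < n * m" and iN: "i < n * m" and k: "k = Suc i mod (n * m) \<or> i = Suc k mod (n * m)"
    using assms unfolding jadj_def by auto
  from k show ?thesis
  proof
    assume k: "k = Suc i mod (n * m)"
    show ?thesis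
    proof (cases "Suc i < n * m")
      case True
      then show ?thesis using that(2) V k by simp
    next
      case False
      then have "Suc i = n * m" using iN by simp
      then show ?thesis using that(3) V k by simp
    qed
  next
    assume i: "i = Suc k mod (n * m)"
    have "Suc k < n * m"
    proof (rule ccontr)
      assume "\<not> Suc k < n * m"
      then have "Suc k = n * m" using kN by simp
      then show False using i assms(2) by simp
    qed
    then show ?thesis using that(4) V i iN by simp
  qed
qed

lemma stuck_move_up:
  assumes D: "stuck n m D" and i: "n < i" "Suc i < n * m" and Di: "2 \<le> D (V i)"
    and D': "D' = D(V i := D (V i) - 2, V (Suc i) := D (V (Suc i)) + 1)"
  shows "stuck n m D'"
proof -
  let ?g = "on_cycle D" and ?g' = "on_cycle D'"
  have gi: "2 \<le> ?g i" using Di by (simp add: on_cycle_def)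
  have g': "?g' = ?g(i := ?g i - 2, Suc i := ?g (Suc i) + 1)"
    using D' by (auto simp: on_cycle_def fun_eq_iff)
  show ?thesis
  proof (rule stuck_if_piles_le[OF D])
    show "\<forall>h. n < h \<and> h < n * m \<longrightarrow> hub_pile ?g' n (n * m) h \<le> hub_pile ?g n (n * m) h"
      using hub_pile_move_up[OF i gi g'] by blast
    show "pile_up ?g' n (n * m - 1) \<le> pile_up ?g n (n * m - 1)"
      using pile_up_move_up[OF i gi g', of "n * m - 1"] by simp
    show "pile_down ?g' (n * m) (n + 1) \<le> pile_down ?g (n * m) (n + 1)"
      using pile_down_move_up(3)[OF i gi g', of "n + 1"] i by simp
    show "D' U = 0" "\<forall>p\<le>n. D' (V p) = 0" "\<forall>p\<ge>n * m. D' (V p) = 0"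
      using D D' i unfolding stuck_def by auto
  qed
qed

lemma stuck_move_down:
  assumes D: "stuck n m D" and x: "n < x" "Suc x < n * m" and Dx: "2 \<le> D (V (Suc x))"
    and D': "D' = D(V (Suc x) := D (V (Suc x)) - 2, V x := D (V x) + 1)"
  shows "stuck n m D'"
proof -
  let ?g = "on_cycle D" and ?g' = "on_cycle D'"
  have gx: "2 \<le> ?g (Suc x)" using Dx by (simp add: on_cycle_def)
  have g': "?g' = ?g(Suc x := ?g (Suc x) - 2, x := ?g x + 1)"
    using D' by (auto simp: on_cycle_def fun_eq_iff)
  show ?thesis
  proof (rule stuck_if_piles_le[OF D])
    show "\<forall>h. n < h \<and> h < n * m \<longrightarrow> hub_pile ?g' n (n * m) h \<le> hub_pile ?g n (n * m) h"
      using hub_pile_move_down[OF x gx g'] by blast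
    show "pile_up ?g' n (n * m - 1) \<le> pile_up ?g n (n * m - 1)"
      using pile_up_move_down(3)[OF x gx g', of "n * m - 1"] x by simp
    show "pile_down ?g' (n * m) (n + 1) \<le> pile_down ?g (n * m) (n + 1)"
      using pile_down_move_down[OF x gx g', of "n + 1"] by simp
    show "D' U = 0" "\<forall>p\<le>n. D' (V p) = 0" "\<forall>p\<ge>n * m. D' (V p) = 0"
      using D D' x unfolding stuck_def by auto
  qed
qed

text \<open>A move from \<open>v\<^sub>i\<close> to \<open>u\<close>, to \<open>v\<^sub>0\<close> or to \<open>v\<^sub>n\<close> would need two pebbles where a
  stuck distribution has at most one.\<close>

lemma stuck_pmove:
  assumes "stuck n m D" and "pmove n m D D'"
  shows "stuck n m D'"
proof -
  let ?g = "on_cycle D"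
  obtain x y where adj: "jadj n m x y" and x2: "2 \<le> D x" and D': "D' = D(x := D x - 2, y := D y + 1)"
    using assms(2) unfolding pmove_def by blast
  have DU: "D U = 0" and lo: "\<forall>i\<le>n. D (V i) = 0" and hi: "\<forall>i\<ge>n * m. D (V i) = 0"
    and hubs: "\<forall>h. n < h \<and> h < n * m \<and> n dvd h \<longrightarrow> hub_pile ?g n (n * m) h \<le> 1"
    and last: "pile_up ?g n (n * m - 1) \<le> 1" and first: "pile_down ?g (n * m) (n + 1) \<le> 1"
    using assms(1) unfolding stuck_def by auto
  obtain i where xi: "x = V i" using DU x2 by (cases x) auto
  have ni: "n < i" using lo x2 xi by (cases "i \<le> n") auto
  have iN: "i < n * m" using hi x2 xi by (cases "n * m \<le> i") auto
  have gi: "2 \<le> ?g i" using x2 xi by (simp add: on_cycle_def)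
  from adj[unfolded xi] have "jadj n m (V i) y" .
  moreover have "0 < i" using ni by simp
  ultimately show ?thesis
  proof (cases rule: jadj_V_cases)
    case hub
    have "hub_pile ?g n (n * m) i \<le> 1" using hubs[rule_format, of i] hub(2) ni iN by simp
    then show ?thesis using gi unfolding hub_pile_def by simp
  next
    case up
    then show ?thesis using stuck_move_up[OF assms(1) ni up(2)] x2 D' xi by simp
  next
    case wrap
    then have "i = n * m - 1" by simp
    then show ?thesis using last pile_up_ge[of n i ?g] ni gi by simp
  next
    case down
    show ?thesis
    proof (cases "i - 1 = n")
      case True
      then have "i = n + 1" using ni by simp
      then show ?thesis using first pile_down_ge[of i "n * m" ?g] iN gi by simp
    next
      case False
      then have "i = Suc (i - 1)" "n < i - 1" using ni by auto
      then show ?thesis using stuck_move_down[OF assms(1), of "i - 1"] iN x2 D' xi down by auto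
    qed
  qed
qed

lemma stuck_rtranclp: "(pmove n m)\<^sup>*\<^sup>* D D' \<Longrightarrow> stuck n m D \<Longrightarrow> stuck n m D'"
  by (induction rule: rtranclp_induct) (auto intro: stuck_pmove)

lemma stuck_not_reachable:
  assumes "stuck n m D"
  shows "\<not> reachable n m D U" "\<not> reachable n m D (V 0)" "\<not> reachable n m D (V n)"
  using stuck_rtranclp[OF _ assms] unfolding reachable_def stuck_def by fastforce+

section \<open>Greedy moves witness reachability\<close>

lemma jadj_neq: "jadj n m x y \<Longrightarrow> x \<noteq> y"
  unfolding jadj_def by (cases x; cases y) auto

lemma rtranclp_pmove_repeat:
  assumes adj: "jadj n m x y" and k: "2 * k \<le> D x"
  shows "(pmove n m)\<^sup>*\<^sup>* D (D(x := D x - 2 * k, y := D y + k))"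
  using k
proof (induction k)
  case (Suc k)
  have "x \<noteq> y" using jadj_neq[OF adj] .
  then have "pmove n m (D(x := D x - 2 * k, y := D y + k)) (D(x := D x - 2 * Suc k, y := D y + Suc k))"
    unfolding pmove_def using adj Suc.prems
    by (intro exI[of _ x] exI[of _ y]) (auto simp: fun_eq_iff)
  moreover have "2 * k \<le> D x" using Suc.prems by simp
  ultimately show ?case using Suc.IH by (meson rtranclp.rtrancl_into_rtrancl)
qed simp

lemma jadj_Suc: "Suc i < n * m \<Longrightarrow> jadj n m (V i) (V (Suc i))"
  unfolding jadj_def by simp

lemma jadj_Suc_back: "Suc i < n * m \<Longrightarrow> jadj n m (V (Suc i)) (V i)"
  unfolding jadj_def by simp

lemma jadj_wrap: "2 \<le> n * m \<Longrightarrow> jadj n m (V (n * m - 1)) (V 0)"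
  unfolding jadj_def by (cases "n * m") auto

lemma jadj_hub: "h < n * m \<Longrightarrow> n dvd h \<Longrightarrow> jadj n m (V h) U"
  unfolding jadj_def by simp

lemma rtranclp_pile_up:
  assumes "a \<le> i" "i < n * m"
  shows "\<exists>D'. (pmove n m)\<^sup>*\<^sup>* D D' \<and> pile_up (on_cycle D) a i \<le> D' (V i) \<and>
    (\<forall>y. y \<notin> V ` {a<..i} \<longrightarrow> D y \<le> D' y)"
  using assms
proof (induction i)
  case 0
  then show ?case by auto
next
  case (Suc i)
  show ?case
  proof (cases "a = Suc i")
    case True
    then show ?thesis by auto
  next
    case False
    then have ai: "a \<le> i" using Suc.prems by simp
    then obtain Da where Da: "(pmove n m)\<^sup>*\<^sup>* D Da" "pile_up (on_cycle D) a i \<le> Da (V i)"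
      "\<forall>y. y \<notin> V ` {a<..i} \<longrightarrow> D y \<le> Da y" using Suc by auto
    let ?k = "pile_up (on_cycle D) a i div 2"
    have "2 * ?k \<le> Da (V i)" using Da(2) by linarith
    then have mv: "(pmove n m)\<^sup>*\<^sup>* Da (Da(V i := Da (V i) - 2 * ?k, V (Suc i) := Da (V (Suc i)) + ?k))"
      using rtranclp_pmove_repeat[OF jadj_Suc[OF Suc.prems(2)]] by blast
    let ?Db = "Da(V i := Da (V i) - 2 * ?k, V (Suc i) := Da (V (Suc i)) + ?k)"
    have "V (Suc i) \<notin> V ` {a<..i}" by auto
    then have f: "D (V (Suc i)) \<le> Da (V (Suc i))" using Da(3) by blast
    show ?thesis
    proof (intro exI conjI allI impI)
      show "(pmove n m)\<^sup>*\<^sup>* D ?Db" using Da(1) mv by (rule rtranclp_trans)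
      show "pile_up (on_cycle D) a (Suc i) \<le> ?Db (V (Suc i))"
        using pile_up_Suc[of a i "on_cycle D"] ai f unfolding on_cycle_def by simp
      fix y assume yn: "y \<notin> V ` {a<..Suc i}"
      then have y1: "y \<noteq> V (Suc i)" "y \<notin> V ` {a<..i}" using ai False by auto
      show "D y \<le> ?Db y"
      proof (cases "y = V i")
        case True
        then have "a = i" using yn ai by (cases "a = i") auto
        then show ?thesis using Da(3) y1 True by simp
      next
        case False
        then show ?thesis using Da(3) y1 by simp
      qed
    qed
  qed
qed

lemma rtranclp_pile_down:
  assumes "i \<le> b" "b \<le> n * m"
  shows "\<exists>D'. (pmove n m)\<^sup>*\<^sup>* D D' \<and> pile_down (on_cycle D) b i \<le> D' (V i) \<and>
    (\<forall>y. y \<notin> V ` {i..<b} \<longrightarrow> D y \<le> D' y)"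
  using assms
proof (induction "b - i" arbitrary: i)
  case 0
  then show ?case by auto
next
  case (Suc k)
  show ?case
  proof (cases "Suc i = b")
    case True
    have "pile_down (on_cycle D) b i = D (V i)"
      using pile_down_step[of i b "on_cycle D"] True unfolding on_cycle_def by simp
    then show ?thesis by auto
  next
    case False
    then have ib: "Suc i < b" "k = b - Suc i" using Suc by auto
    then obtain Da where Da: "(pmove n m)\<^sup>*\<^sup>* D Da" "pile_down (on_cycle D) b (Suc i) \<le> Da (V (Suc i))"
      "\<forall>y. y \<notin> V ` {Suc i..<b} \<longrightarrow> D y \<le> Da y"
      using Suc.hyps(1)[of "Suc i", OF ib(2)] ib(1) Suc.prems(2) by auto
    let ?k = "pile_down (on_cycle D) b (Suc i) div 2"
    have "2 * ?k \<le> Da (V (Suc i))" using Da(2) by linarith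
    have mv: "(pmove n m)\<^sup>*\<^sup>* Da (Da(V (Suc i) := Da (V (Suc i)) - 2 * ?k, V i := Da (V i) + ?k))"
    proof -
      have "Suc i < n * m" using ib Suc.prems by simp
      then show ?thesis
        using rtranclp_pmove_repeat[OF jadj_Suc_back[of i n m]] \<open>2 * ?k \<le> Da (V (Suc i))\<close> by blast
    qed
    let ?Db = "Da(V (Suc i) := Da (V (Suc i)) - 2 * ?k, V i := Da (V i) + ?k)"
    have "V i \<notin> V ` {Suc i..<b}" by auto
    then have f: "D (V i) \<le> Da (V i)" using Da(3) by blast
    show ?thesis
    proof (intro exI conjI allI impI)
      show "(pmove n m)\<^sup>*\<^sup>* D ?Db" using Da(1) mv by (rule rtranclp_trans)
      show "pile_down (on_cycle D) b i \<le> ?Db (V i)"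
        using pile_down_step[of i b "on_cycle D"] ib f unfolding on_cycle_def by simp
      fix y assume "y \<notin> V ` {i..<b}"
      then have "y \<noteq> V i" "y \<noteq> V (Suc i)" "y \<notin> V ` {Suc i..<b}" using ib by auto
      then show "D y \<le> ?Db y" using Da(3) by simp
    qed
  qed
qed

lemma reachable_rtranclp: "(pmove n m)\<^sup>*\<^sup>* D Da \<Longrightarrow> reachable n m Da t \<Longrightarrow> reachable n m D t"
  unfolding reachable_def by (meson rtranclp_trans)

lemma reachable_adj:
  assumes "jadj n m x t" "2 \<le> D x"
  shows "reachable n m D t"
proof -
  have "(pmove n m)\<^sup>*\<^sup>* D (D(x := D x - 2 * 1, t := D t + 1))"
    using rtranclp_pmove_repeat[of n m x t 1 D] assms by simp
  moreover have "x \<noteq> t" using jadj_neq[OF assms(1)] .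
  ultimately show ?thesis unfolding reachable_def by force
qed

lemma reachable_hub:
  assumes ah: "a < h" and hb: "h < b" and bN: "b \<le> n * m" and dv: "n dvd h"
    and big: "2 \<le> D (V h) + pile_up (on_cycle D) a (h - 1) div 2 + pile_down (on_cycle D) b (h + 1) div 2"
  shows "reachable n m D U"
proof -
  obtain D1 where D1: "(pmove n m)\<^sup>*\<^sup>* D D1" "pile_up (on_cycle D) a h \<le> D1 (V h)"
    "\<forall>y. y \<notin> V ` {a<..h} \<longrightarrow> D y \<le> D1 y"
    using rtranclp_pile_up[of a h n m D] ah hb bN by auto
  obtain D2 where D2: "(pmove n m)\<^sup>*\<^sup>* D1 D2" "pile_down (on_cycle D1) b h \<le> D2 (V h)"
    using rtranclp_pile_down[of h b n m D1] hb bN by auto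
  have "pile_down (on_cycle D) b (h + 1) \<le> pile_down (on_cycle D1) b (h + 1)"
  proof (rule pile_down_mono, intro allI impI)
    fix p assume "h + 1 \<le> p \<and> p < b"
    then have "V p \<notin> V ` {a<..h}" by auto
    then show "on_cycle D p \<le> on_cycle D1 p" using D1(3) by (simp add: on_cycle_def)
  qed
  moreover have "pile_up (on_cycle D) a h = D (V h) + pile_up (on_cycle D) a (h - 1) div 2"
    using pile_up_Suc[of a "h - 1" "on_cycle D"] ah by (simp add: on_cycle_def)
  ultimately have "2 \<le> pile_down (on_cycle D1) b h"
    using pile_down_step[of h b "on_cycle D1"] hb big D1(2) by (simp add: on_cycle_def div_le_mono)
  then have "reachable n m D2 U"
    using D2(2) reachable_adj[of n m "V h" U] jadj_hub[of h n m] dv hb bN by simp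
  then show ?thesis using reachable_rtranclp D1(1) D2(1) by blast
qed

lemma reachable_V_n:
  assumes nb: "n + 1 < b" and bN: "b \<le> n * m" and big: "2 \<le> pile_down (on_cycle D) b (n + 1)"
  shows "reachable n m D (V n)"
proof -
  obtain Da where Da: "(pmove n m)\<^sup>*\<^sup>* D Da" "pile_down (on_cycle D) b (n + 1) \<le> Da (V (n + 1))"
    using rtranclp_pile_down[of "n + 1" b n m D] nb bN by auto
  have "reachable n m Da (V n)"
    using reachable_adj[of n m "V (Suc n)" "V n" Da] jadj_Suc_back[of n n m] nb bN Da(2) big by simp
  then show ?thesis using reachable_rtranclp[OF Da(1)] by blast
qed

lemma reachable_V_0:
  assumes aN: "a < n * m - 1" and big: "2 \<le> pile_up (on_cycle D) a (n * m - 1)"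
  shows "reachable n m D (V 0)"
proof -
  obtain Da where Da: "(pmove n m)\<^sup>*\<^sup>* D Da" "pile_up (on_cycle D) a (n * m - 1) \<le> Da (V (n * m - 1))"
  proof -
    have "n * m - 1 < n * m" using aN by linarith
    then show ?thesis using rtranclp_pile_up[of a "n * m - 1" n m D] aN that by auto
  qed
  have "2 \<le> n * m" using aN by linarith
  then have "reachable n m Da (V 0)"
    using reachable_adj[of n m "V (n * m - 1)" "V 0" Da] jadj_wrap[of n m] Da(2) big by simp
  then show ?thesis using reachable_rtranclp[OF Da(1)] by blast
qed

section \<open>Weight bounds for cycles\<close>

lemma pow2_mod_3: "(2::nat) ^ j mod 3 = 1 \<or> (2::nat) ^ j mod 3 = 2"
proof (induction j)
  case (Suc j)
  have "(2::nat) ^ Suc j mod 3 = 2 * (2 ^ j mod 3) mod 3" by (simp add: mod_mult_right_eq)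
  with Suc show ?case by auto
qed simp

lemma pow2_balanced_le: "p \<le> 2 * k \<Longrightarrow> (2::nat) ^ (k + 1) \<le> 2 ^ p + 2 ^ (2 * k - p)"
proof (cases "p \<le> k")
  case True
  show ?thesis
  proof (cases "p = k")
    case False
    with True have "(2::nat) ^ (k + 1) \<le> 2 ^ (2 * k - p)" by (intro power_increasing) simp_all
    then show ?thesis by simp
  qed (simp add: mult_2)
next
  case False
  then have "(2::nat) ^ (k + 1) \<le> 2 ^ p" by (intro power_increasing) simp_all
  then show ?thesis by simp
qed

text \<open>A pebble at position \<open>p\<close> of a cycle of length \<open>L\<close> is weighted \<open>2\<^sup>p\<close> and
  \<open>2\<^bsup>L-p\<^esup>\<close> from the two sides of the target; if both total weights stay below \<open>2\<^sup>L\<close>,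
  there are fewer than \<open>f(C\<^sub>L)\<close> pebbles.\<close>

lemma weight_bound_even:
  fixes e pos :: "'i \<Rightarrow> nat"
  assumes "\<forall>i\<in>I. pos i \<le> 2 * k"
    and X: "(\<Sum>i\<in>I. e i * 2 ^ pos i) < 2 ^ (2 * k)"
    and Y: "(\<Sum>i\<in>I. e i * 2 ^ (2 * k - pos i)) < 2 ^ (2 * k)"
  shows "(\<Sum>i\<in>I. e i) < 2 ^ k"
proof -
  have "(\<Sum>i\<in>I. e i) * 2 ^ (k + 1) = (\<Sum>i\<in>I. e i * 2 ^ (k + 1))"
    by (simp add: sum_distrib_right)
  also have "\<dots> \<le> (\<Sum>i\<in>I. e i * 2 ^ pos i + e i * 2 ^ (2 * k - pos i))"
    using assms(1) pow2_balanced_le by (intro sum_mono) (simp add: add_mult_distrib2[symmetric])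
  also have "\<dots> < 2 ^ (2 * k) + 2 ^ (2 * k)" using X Y by (simp add: sum.distrib)
  also have "\<dots> = 2 ^ k * 2 ^ (k + 1)" by (simp add: mult_2 power_add distrib_left)
  finally show ?thesis by simp
qed

lemma odd_count_le:
  fixes A B C T :: nat
  assumes "A + 2 * B < T" "2 * A + B < T" "3 * A + 3 * B + 4 * C < 2 * T" "T mod 3 \<noteq> 0"
  shows "A + B + C \<le> 2 * (T div 3)"
proof -
  have "3 * (A + B + C) + 2 \<le> 2 * T" using assms(1-3) by (cases "C = 0") simp_all
  moreover have "T = 3 * (T div 3) + 1 \<or> T = 3 * (T div 3) + 2" using assms(4) by presburger
  ultimately show ?thesis by presburger
qed

lemma pow2_far_from_middle:
  assumes "p \<le> 2 * k + 1" "p \<noteq> k" "p \<noteq> k + 1"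
  shows "4 * 2 ^ k \<le> (2::nat) ^ p + 2 ^ (2 * k + 1 - p)"
proof (cases "p < k")
  case True
  then have "(2::nat) ^ (k + 2) \<le> 2 ^ (2 * k + 1 - p)" by (intro power_increasing) simp_all
  then show ?thesis by (simp add: power_add)
next
  case False
  then have "(2::nat) ^ (k + 2) \<le> 2 ^ p" using assms by (intro power_increasing) simp_all
  then show ?thesis by (simp add: power_add)
qed

text \<open>In units of \<open>2\<^sup>k\<close>, a pebble at one of the two middle positions \<open>k\<close>, \<open>k + 1\<close> weighs
  \<open>1\<close> and \<open>2\<close> from the two sides, any other pebble at least \<open>4\<close> in total.\<close>

lemma weight_bound_odd:
  fixes e pos :: "'i \<Rightarrow> nat"
  assumes "\<forall>i\<in>I. pos i \<le> 2 * k + 1"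
    and X: "(\<Sum>i\<in>I. e i * 2 ^ pos i) < 2 ^ (2 * k + 1)"
    and Y: "(\<Sum>i\<in>I. e i * 2 ^ (2 * k + 1 - pos i)) < 2 ^ (2 * k + 1)"
  shows "(\<Sum>i\<in>I. e i) \<le> 2 * (2 ^ (k + 1) div 3)"
proof -
  define a where "a i = (if pos i = k then e i else 0)" for i
  define b where "b i = (if pos i = k + 1 then e i else 0)" for i
  define c where "c i = (if pos i \<noteq> k \<and> pos i \<noteq> k + 1 then e i else 0)" for i
  define L where "L = 2 * k + 1"
  have "(2::nat) ^ L = 2 ^ k * 2 ^ (k + 1)" unfolding L_def by (simp add: mult_2 power_add distrib_left)
  then have X': "(\<Sum>i\<in>I. e i * 2 ^ pos i) < 2 ^ k * 2 ^ (k + 1)"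
    and Y': "(\<Sum>i\<in>I. e i * 2 ^ (L - pos i)) < 2 ^ k * 2 ^ (k + 1)"
    using X Y unfolding L_def by simp_all
  let ?A = "\<Sum>i\<in>I. a i" and ?B = "\<Sum>i\<in>I. b i" and ?C = "\<Sum>i\<in>I. c i"
  have "2 ^ k * (?A + 2 * ?B) = (\<Sum>i\<in>I. 2 ^ k * (a i + 2 * b i))"
    by (simp add: sum.distrib sum_distrib_left sum_distrib_right algebra_simps)
  also have "\<dots> \<le> (\<Sum>i\<in>I. e i * 2 ^ pos i)"
    by (rule sum_mono) (simp add: a_def b_def)
  finally have "2 ^ k * (?A + 2 * ?B) < 2 ^ k * 2 ^ (k + 1)" using X' by linarith
  then have AB: "?A + 2 * ?B < 2 ^ (k + 1)" by simp
  have "2 ^ k * (2 * ?A + ?B) = (\<Sum>i\<in>I. 2 ^ k * (2 * a i + b i))"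
    by (simp add: sum.distrib sum_distrib_left sum_distrib_right algebra_simps)
  also have "\<dots> \<le> (\<Sum>i\<in>I. e i * 2 ^ (L - pos i))"
    by (rule sum_mono) (simp add: a_def b_def L_def)
  finally have "2 ^ k * (2 * ?A + ?B) < 2 ^ k * 2 ^ (k + 1)" using Y' by linarith
  then have BA: "2 * ?A + ?B < 2 ^ (k + 1)" by simp
  have "2 ^ k * (3 * ?A + 3 * ?B + 4 * ?C) = (\<Sum>i\<in>I. 2 ^ k * (3 * a i + 3 * b i + 4 * c i))"
    by (simp add: sum.distrib sum_distrib_left sum_distrib_right algebra_simps)
  also have "\<dots> \<le> (\<Sum>i\<in>I. e i * 2 ^ pos i + e i * 2 ^ (L - pos i))"
  proof (rule sum_mono)
    fix i assume "i \<in> I"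
    then have "pos i \<le> L" using assms(1) L_def by simp
    show "2 ^ k * (3 * a i + 3 * b i + 4 * c i) \<le> e i * 2 ^ pos i + e i * 2 ^ (L - pos i)"
    proof (cases "pos i = k \<or> pos i = k + 1")
      case True
      then show ?thesis unfolding a_def b_def c_def L_def by (auto simp: algebra_simps power_add)
    next
      case False
      then have "e i * (4 * 2 ^ k) \<le> e i * (2 ^ pos i + 2 ^ (L - pos i))"
        using pow2_far_from_middle[of "pos i" k] \<open>pos i \<le> L\<close> unfolding L_def by simp
      then show ?thesis using False unfolding a_def b_def c_def by (simp add: algebra_simps)
    qed
  qed
  also have "\<dots> < 2 ^ k * (2 * 2 ^ (k + 1))" using X' Y' by (simp add: sum.distrib)
  finally have ABC: "3 * ?A + 3 * ?B + 4 * ?C < 2 * 2 ^ (k + 1)" by simp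
  have "(\<Sum>i\<in>I. e i) = ?A + ?B + ?C"
    unfolding sum.distrib[symmetric] by (rule sum.cong) (auto simp: a_def b_def c_def)
  also have "\<dots> \<le> 2 * (2 ^ (k + 1) div 3)"
    using odd_count_le[OF AB BA ABC] pow2_mod_3[of "k + 1"] by auto
  finally show ?thesis .
qed

lemma cycle_weight_bound:
  fixes e pos :: "'i \<Rightarrow> nat"
  assumes "\<forall>i\<in>I. pos i \<le> L"
    and "(\<Sum>i\<in>I. e i * 2 ^ pos i) < 2 ^ L" and "(\<Sum>i\<in>I. e i * 2 ^ (L - pos i)) < 2 ^ L"
  shows "(\<Sum>i\<in>I. e i) + 1 \<le> fC L"
proof (cases "even L")
  case True
  then obtain k where "L = 2 * k" by blast
  with assms weight_bound_even[of I pos k e] show ?thesis by (simp add: fC_def)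
next
  case False
  then obtain k where "L = 2 * k + 1" using oddE by blast
  with assms weight_bound_odd[of I pos k e] show ?thesis by (simp add: fC_def)
qed

lemma segment_weight_up:
  assumes "2 \<le> n" and "pile_up g s (s + n - 1) \<le> 2 * c + 1"
  shows "(\<Sum>q\<in>{1..<n}. g (s + q) * 2 ^ q) < 2 ^ n * (c + 1)"
proof -
  have "(\<Sum>q\<in>{1..n - 1}. g (s + q) * 2 ^ q) + 1 \<le> 2 ^ (n - 1) * (pile_up g s (s + (n - 1)) + 1)"
    by (rule pile_up_weighted_sum)
  also have "\<dots> \<le> 2 ^ (n - 1) * (2 * c + 2)"
    using assms by (intro mult_left_mono) simp_all
  also have "\<dots> = 2 ^ n * (c + 1)"
    using assms(1) by (cases n) simp_all
  finally show ?thesis using assms(1) by (simp add: atLeastLessThan_nat_numeral atLeastLessThanSuc_atLeastAtMost[symmetric])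
qed

lemma segment_weight_down:
  assumes "2 \<le> n" and "pile_down g (s + n) (s + 1) \<le> 2 * c + 1"
  shows "(\<Sum>q\<in>{1..<n}. g (s + q) * 2 ^ (n - q)) < 2 ^ n * (c + 1)"
proof -
  have "(\<Sum>q\<in>{1..<n}. g (s + q) * 2 ^ (n - q)) = (\<Sum>q\<in>{1..n - 1}. g (s + n - q) * 2 ^ q)"
    by (rule sum.reindex_bij_witness[of _ "\<lambda>q. n - q" "\<lambda>q. n - q"]) auto
  also have "\<dots> + 1 \<le> 2 ^ (n - 1) * (pile_down g (s + n) (s + n - (n - 1)) + 1)"
    by (rule pile_down_weighted_sum) simp
  also have "\<dots> \<le> 2 ^ (n - 1) * (2 * c + 2)"
    using assms by (intro mult_left_mono) (simp_all add: Suc_diff_le)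
  also have "\<dots> = 2 ^ n * (c + 1)"
    using assms(1) by (cases n) simp_all
  finally show ?thesis by simp
qed

text \<open>With \<open>cL\<close> resp. \<open>cR\<close> virtual vertices added beyond the ends, the inner path of a
  segment becomes a cycle of length \<open>n + cL + cR\<close> on which the weight bound applies.\<close>

lemma segment_sum_bound:
  assumes n: "2 \<le> n" and cL: "cL \<le> 1" and cR: "cR \<le> 1"
    and "pile_down g (s + n) (s + 1) \<le> 2 * cL + 1" and "pile_up g s (s + n - 1) \<le> 2 * cR + 1"
  shows "(\<Sum>q\<in>{1..<n}. g (s + q)) + 1 \<le> fC (n + cL + cR)"
proof -
  let ?L = "n + cL + cR"
  have pow: "cR + 1 = 2 ^ cR" "cL + 1 = 2 ^ cL" using cL cR by (auto simp: le_Suc_eq)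
  have "(\<Sum>q\<in>{1..<n}. g (s + q) * 2 ^ (q + cL)) = (\<Sum>q\<in>{1..<n}. g (s + q) * 2 ^ q) * 2 ^ cL"
    by (simp add: sum_distrib_right power_add mult.assoc)
  also have "\<dots> < 2 ^ n * (cR + 1) * 2 ^ cL"
    using segment_weight_up[OF n assms(5)] by (intro mult_strict_right_mono) simp_all
  also have "\<dots> = 2 ^ ?L" unfolding pow by (simp add: power_add ac_simps)
  finally have up: "(\<Sum>q\<in>{1..<n}. g (s + q) * 2 ^ (q + cL)) < 2 ^ ?L" .
  have "(\<Sum>q\<in>{1..<n}. g (s + q) * 2 ^ (?L - (q + cL))) = (\<Sum>q\<in>{1..<n}. g (s + q) * 2 ^ (n - q)) * 2 ^ cR"
    unfolding sum_distrib_right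
  proof (rule sum.cong)
    fix q assume "q \<in> {1..<n}"
    then have "?L - (q + cL) = (n - q) + cR" by simp
    then show "g (s + q) * 2 ^ (?L - (q + cL)) = g (s + q) * 2 ^ (n - q) * 2 ^ cR"
      by (simp add: power_add mult.assoc)
  qed simp
  also have "\<dots> < 2 ^ n * (cL + 1) * 2 ^ cR"
    using segment_weight_down[OF n assms(4)] by (intro mult_strict_right_mono) simp_all
  also have "\<dots> = 2 ^ ?L" unfolding pow by (simp add: power_add ac_simps)
  finally have down: "(\<Sum>q\<in>{1..<n}. g (s + q) * 2 ^ (?L - (q + cL))) < 2 ^ ?L" .
  show ?thesis by (rule cycle_weight_bound[OF _ up down]) simp
qed

section \<open>Arithmetic of the bound\<close>

lemma steps_even_arith:
  fixes P q r :: nat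
  assumes "2 * P = 3 * q + r" "r = 1 \<or> r = 2" "2 \<le> P"
  shows "P < 2 * q + 1" "2 * q + 1 \<le> 2 * P" "(2 * q + 1) - P \<le> 2 * P - (2 * q + 1)"
proof -
  have "r = 1 \<or> 2 \<le> q" using assms by presburger
  then show "P < 2 * q + 1" "2 * q + 1 \<le> 2 * P" "(2 * q + 1) - P \<le> 2 * P - (2 * q + 1)"
    using assms by arith+
qed

lemma steps_odd_arith:
  fixes T q r :: nat
  assumes "T = 3 * q + r" "r = 1 \<or> r = 2" "4 \<le> T"
  shows "2 * q + 1 < T" "T \<le> 2 * (2 * T div 3) + 1" "T - (2 * q + 1) \<le> (2 * (2 * T div 3) + 1) - T"
proof -
  have "2 * T div 3 = 2 * q + (if r = 1 then 0 else 1)" using assms(1,2) by auto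
  then show "2 * q + 1 < T" "T \<le> 2 * (2 * T div 3) + 1" "T - (2 * q + 1) \<le> (2 * (2 * T div 3) + 1) - T"
    using assms by (auto split: if_splits)
qed

lemma fC_steps:
  assumes "2 \<le> n"
  shows "1 \<le> fC n" and "fC n < fC (n + 1)" and "fC (n + 1) \<le> fC (n + 2)"
    and "fC (n + 1) - fC n \<le> fC (n + 2) - fC (n + 1)"
proof -
  have "1 \<le> fC n \<and> fC n < fC (n + 1) \<and> fC (n + 1) \<le> fC (n + 2) \<and>
      fC (n + 1) - fC n \<le> fC (n + 2) - fC (n + 1)"
  proof (cases "even n")
    case True
    then obtain k where n: "n = 2 * k" by blast
    define P where "P = (2::nat) ^ k"
    have "(2::nat) ^ 1 \<le> P" unfolding P_def using assms n by (intro power_increasing) simp_all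
    moreover have "fC n = P" unfolding fC_def P_def using n by simp
    moreover have "fC (n + 1) = 2 * (2 * P div 3) + 1" unfolding fC_def P_def using n by simp
    moreover have "fC (n + 2) = 2 * P" unfolding fC_def P_def using n by simp
    moreover have "2 * P = 3 * (2 * P div 3) + 2 * P mod 3" by simp
    moreover have "2 * P mod 3 = 1 \<or> 2 * P mod 3 = 2"
      using pow2_mod_3[of "k + 1"] unfolding P_def by simp
    ultimately show ?thesis using steps_even_arith[of P "2 * P div 3" "2 * P mod 3"] by simp
  next
    case False
    then obtain k where n: "n = 2 * k + 1" using oddE by blast
    define T where "T = (2::nat) ^ (k + 1)"
    have "(2::nat) ^ 2 \<le> T" unfolding T_def using assms n by (intro power_increasing) simp_all
    moreover have "fC n = 2 * (T div 3) + 1" unfolding fC_def T_def using n by simp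
    moreover have "fC (n + 1) = T" unfolding fC_def T_def using n by simp
    moreover have "fC (2 * (k + 1) + 1) = 2 * (2 ^ (k + 1 + 1) div 3) + 1" unfolding fC_def by simp
    then have "fC (n + 2) = 2 * (2 * T div 3) + 1" unfolding T_def using n by simp
    moreover have "T mod 3 = 1 \<or> T mod 3 = 2" unfolding T_def by (rule pow2_mod_3)
    ultimately show ?thesis using steps_odd_arith[of T "T div 3" "T mod 3"] by simp
  qed
  then show "1 \<le> fC n" "fC n < fC (n + 1)" "fC (n + 1) \<le> fC (n + 2)"
    "fC (n + 1) - fC n \<le> fC (n + 2) - fC (n + 1)" by auto
qed

text \<open>Being linear in \<open>c\<close> and \<open>c div 2\<close>, this form of \<open>f(C\<^bsub>n+c\<^esub>) - 1\<close>, \<open>c \<le> 2\<close>,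
  turns sums over the segments into sums of \<open>c\<close> and of \<open>c div 2\<close>.\<close>

definition fC_lin :: "nat \<Rightarrow> nat \<Rightarrow> nat" where
  "fC_lin n c = (fC n - 1) + (fC (n + 1) - fC n) * c
     + ((fC (n + 2) - fC (n + 1)) - (fC (n + 1) - fC n)) * (c div 2)"

lemma fC_lin_eq: "2 \<le> n \<Longrightarrow> c \<le> 2 \<Longrightarrow> fC_lin n c = fC (n + c) - 1"
  using fC_steps[of n] by (auto simp: fC_lin_def le_Suc_eq numeral_2_eq_2)

lemma sum_shift_last:
  fixes f :: "nat \<Rightarrow> nat"
  assumes "2 \<le> m"
  shows "(\<Sum>j\<in>{1..<m}. f j) = (\<Sum>j\<in>{2..<m}. f (j - 1)) + f (m - 1)"
proof -
  have "(\<Sum>j\<in>{2..<m}. f (j - 1)) = (\<Sum>j\<in>{1 + 1..<(m - 1) + 1}. f (j - 1))"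
    using assms by (simp add: numeral_2_eq_2)
  also have "\<dots> = (\<Sum>j\<in>{1..<m - 1}. f j)" by (subst sum.shift_bounds_nat_ivl) simp
  moreover have "{1..<m} = insert (m - 1) {1..<m - 1}" using assms by auto
  ultimately show ?thesis by simp
qed

lemma sum_segments_le:
  fixes S hub cL cR :: "nat \<Rightarrow> nat"
  assumes m: "3 \<le> m" and d: "1 \<le> d1" "d1 \<le> d2"
    and S: "\<forall>j\<in>{1..<m}. S j \<le> e0 + d1 * (cL j + cR j) + (d2 - d1) * ((cL j + cR j) div 2)"
    and hubs: "\<forall>j\<in>{2..<m}. hub j + cR (j - 1) + cL j \<le> 1"
    and ends: "cL 1 = 0" "cR (m - 1) = 0" "hub 1 = 0"
  shows "(\<Sum>j\<in>{1..<m}. hub j + S j) \<le> (m - 1) * e0 + d1 * (m - 2) + (d2 - d1) * ((m - 2) div 2)"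
proof -
  define U where "U = (\<Sum>j\<in>{1..<m}. hub j + (cL j + cR j))"
  define K where "K = (\<Sum>j\<in>{1..<m}. (cL j + cR j) div 2)"
  have "(\<Sum>j\<in>{1..<m}. hub j + S j)
      \<le> (\<Sum>j\<in>{1..<m}. e0 + d1 * (hub j + (cL j + cR j)) + (d2 - d1) * ((cL j + cR j) div 2))"
  proof (rule sum_mono)
    fix j assume "j \<in> {1..<m}"
    then have "S j \<le> e0 + d1 * (cL j + cR j) + (d2 - d1) * ((cL j + cR j) div 2)" using S by blast
    moreover have "hub j \<le> d1 * hub j" using d by simp
    ultimately show "hub j + S j \<le> e0 + d1 * (hub j + (cL j + cR j)) + (d2 - d1) * ((cL j + cR j) div 2)"
      unfolding add_mult_distrib2[of d1 "hub j"] by linarith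
  qed
  also have "\<dots> = (m - 1) * e0 + d1 * U + (d2 - d1) * K"
    unfolding U_def K_def sum_distrib_left by (simp only: sum.distrib) simp
  finally have total: "(\<Sum>j\<in>{1..<m}. hub j + S j) \<le> (m - 1) * e0 + d1 * U + (d2 - d1) * K" .
  have "(\<Sum>j\<in>{1..<m}. hub j + cL j) = (\<Sum>j\<in>{2..<m}. hub j + cL j)"
  proof -
    have "{1..<m} = insert 1 {2..<m}" using m by auto
    then show ?thesis using ends by simp
  qed
  moreover have "(\<Sum>j\<in>{1..<m}. cR j) = (\<Sum>j\<in>{2..<m}. cR (j - 1))"
    using sum_shift_last[of m cR] m ends by simp
  ultimately have "U = (\<Sum>j\<in>{2..<m}. hub j + cR (j - 1) + cL j)"
    unfolding U_def by (simp add: sum.distrib ac_simps)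
  also have "\<dots> \<le> (\<Sum>j\<in>{2..<m}. 1)" using hubs by (intro sum_mono) simp
  finally have U: "U \<le> m - 2" by simp
  have "2 * K \<le> U" unfolding K_def U_def sum_distrib_left by (intro sum_mono) simp
  then have "K \<le> (m - 2) div 2" using U by linarith
  then have "d1 * U + (d2 - d1) * K \<le> d1 * (m - 2) + (d2 - d1) * ((m - 2) div 2)"
    using U by (intro add_mono mult_le_mono2)
  then show ?thesis using total by linarith
qed

lemma alpha_eq_sum:
  assumes n: "2 \<le> n" and m: "3 \<le> m"
  shows "int ((m - 1) * (fC n - 1) + (fC (n + 1) - fC n) * (m - 2)
      + ((fC (n + 2) - fC (n + 1)) - (fC (n + 1) - fC n)) * ((m - 2) div 2)) = alpha n m"
proof -
  define F0 F1 F2 where "F0 = int (fC n)" and "F1 = int (fC (n + 1))" and "F2 = int (fC (n + 2))"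
  have lhs: "int ((m - 1) * (fC n - 1) + (fC (n + 1) - fC n) * (m - 2)
      + ((fC (n + 2) - fC (n + 1)) - (fC (n + 1) - fC n)) * ((m - 2) div 2))
      = (int m - 1) * (F0 - 1) + (F1 - F0) * (int m - 2) + ((F2 - F1) - (F1 - F0)) * int ((m - 2) div 2)"
    using fC_steps[OF n] m unfolding F0_def F1_def F2_def by (simp add: of_nat_diff)
  show ?thesis
  proof (cases "even m")
    case True
    then obtain M where M: "m = 2 * M" by blast
    then have half: "int ((m - 2) div 2) = int M - 1" using m by simp
    have a: "alpha n m = int M * (F0 + F2 - 2) - F2 + 1"
      unfolding alpha_def F0_def F2_def using True M by simp
    show ?thesis unfolding lhs half a using M by (simp add: algebra_simps)
  next
    case False
    then obtain M where M: "m = 2 * M + 1" using oddE by blast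
    then have half: "int ((m - 2) div 2) = int M - 1" using m by simp
    have a: "alpha n m = int M * (F0 + F2 - 2) + F1 - F2"
      unfolding alpha_def F0_def F1_def F2_def using False M by simp
    show ?thesis unfolding lhs half a using M by (simp add: algebra_simps)
  qed
qed

section \<open>Stuck distributions are exactly the locally stuck ones\<close>

text \<open>Pebbles the inner path of segment \<open>P\<^sub>j\<close> can deliver to its left hub \<open>v\<^bsub>jn\<^esub>\<close>
  resp. to its right hub \<open>v\<^bsub>(j+1)n\<^esub>\<close>.\<close>

definition pass_left :: "nat \<Rightarrow> (nat \<Rightarrow> nat) \<Rightarrow> nat \<Rightarrow> nat" where
  "pass_left n g j = pile_down g (j * n + n) (j * n + 1) div 2"

definition pass_right :: "nat \<Rightarrow> (nat \<Rightarrow> nat) \<Rightarrow> nat \<Rightarrow> nat" where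
  "pass_right n g j = pile_up g (j * n) (j * n + n - 1) div 2"

definition locally_stuck :: "nat \<Rightarrow> nat \<Rightarrow> (nat \<Rightarrow> nat) \<Rightarrow> bool" where
  "locally_stuck n m g \<longleftrightarrow>
     (\<forall>j\<in>{2..<m}. g (j * n) + pass_right n g (j - 1) + pass_left n g j \<le> 1) \<and>
     pass_left n g 1 = 0 \<and> pass_right n g (m - 1) = 0"

lemma locally_stuck_passes_le_1:
  assumes "locally_stuck n m g" "j \<in> {1..<m}"
  shows "pass_left n g j \<le> 1" "pass_right n g j \<le> 1"
proof -
  have hubs: "\<forall>j\<in>{2..<m}. g (j * n) + pass_right n g (j - 1) + pass_left n g j \<le> 1"
    and ends: "pass_left n g 1 = 0" "pass_right n g (m - 1) = 0"
    using assms(1) unfolding locally_stuck_def by auto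
  show "pass_left n g j \<le> 1"
    using hubs[rule_format, of j] ends assms(2) by (cases "j = 1") auto
  show "pass_right n g j \<le> 1"
  proof (cases "j = m - 1")
    case False
    then have "Suc j \<in> {2..<m}" using assms(2) by auto
    then show ?thesis using hubs by fastforce
  qed (use ends in simp)
qed

lemma locally_stuck_if_not_reachable:
  assumes n: "2 \<le> n" and m: "3 \<le> m"
    and "\<not> reachable n m D U" "\<not> reachable n m D (V 0)" "\<not> reachable n m D (V n)"
  shows "locally_stuck n m (on_cycle D)"
  unfolding locally_stuck_def
proof (intro conjI ballI)
  let ?g = "on_cycle D"
  fix j assume j: "j \<in> {2..<m}"
  then obtain i where i: "j = Suc i" "1 \<le> i" by (cases j) auto
  have "(i + 2) * n \<le> m * n" using j i by (intro mult_le_mono1) simp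
  then have "i * n + n + n \<le> n * m" by (simp add: algebra_simps)
  moreover have "i * n < i * n + n" "i * n + n < i * n + n + n" using n by simp_all
  ultimately have "\<not> 2 \<le> D (V (i * n + n)) + pile_up ?g (i * n) (i * n + n - 1) div 2
      + pile_down ?g (i * n + n + n) (i * n + n + 1) div 2"
    using reachable_hub[of "i * n" "i * n + n" "i * n + n + n" n m D] assms(3) by auto
  then show "?g (j * n) + pass_right n ?g (j - 1) + pass_left n ?g j \<le> 1"
    using i by (simp add: pass_left_def pass_right_def on_cycle_def algebra_simps)
next
  let ?g = "on_cycle D"
  have "n + 1 < n + n" "n + n \<le> n * m" using n m by (simp_all add: mult_2_right[symmetric])
  then have "\<not> 2 \<le> pile_down ?g (n + n) (n + 1)"
    using reachable_V_n[of n "n + n" m D] assms(5) by auto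
  then show "pass_left n ?g 1 = 0" by (simp add: pass_left_def)
  have mn: "(m - 1) * n + n = n * m" using m by (cases m) (auto simp: algebra_simps)
  then have "(m - 1) * n < n * m - 1" using n by linarith
  then have "\<not> 2 \<le> pile_up ?g ((m - 1) * n) (n * m - 1)"
    using reachable_V_0[of "(m - 1) * n" n m D] assms(4) by auto
  then show "pass_right n ?g (m - 1) = 0" using mn by (simp add: pass_right_def)
qed

lemma pile_up_into_segment:
  "2 \<le> n \<Longrightarrow> 1 \<le> j \<Longrightarrow> pile_up g n (j * n) \<le> 1 \<Longrightarrow>
    pile_up g n (j * n + n - 1) = pile_up g (j * n) (j * n + n - 1)"
  by (rule pile_up_restart) simp_all

lemma pile_down_into_segment:
  "2 \<le> n \<Longrightarrow> j < m \<Longrightarrow> pile_down g (n * m) (j * n + n) \<le> 1 \<Longrightarrow>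
    pile_down g (n * m) (j * n + 1) = pile_down g (j * n + n) (j * n + 1)"
proof (rule pile_down_restart)
  assume "j < m"
  then have "(j + 1) * n \<le> m * n" by (intro mult_le_mono1) simp
  then show "j * n + n \<le> n * m" by (simp add: algebra_simps)
qed simp_all

lemma pile_up_hubs_le_1:
  assumes n: "2 \<le> n" and g: "locally_stuck n m g"
  shows "1 \<le> j \<Longrightarrow> j < m \<Longrightarrow> pile_up g n (j * n) \<le> 1"
proof (induction j)
  case (Suc j)
  show ?case
  proof (cases "j = 0")
    case False
    then have "n \<le> j * n" by simp
    moreover have e: "Suc j * n = Suc (j * n + n - 1)" using n by simp
    ultimately have "pile_up g n (Suc j * n) = g (Suc j * n) + pile_up g n (j * n + n - 1) div 2"
      unfolding e by (intro pile_up_Suc) linarith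
    also have "\<dots> = g (Suc j * n) + pass_right n g j + 0"
      using pile_up_into_segment[OF n _ Suc.IH] Suc.prems False by (simp add: pass_right_def)
    also have "\<dots> \<le> g (Suc j * n) + pass_right n g (Suc j - 1) + pass_left n g (Suc j)" by simp
    also have "\<dots> \<le> 1"
    proof -
      have "Suc j \<in> {2..<m}" using Suc.prems False by auto
      then show ?thesis using g unfolding locally_stuck_def by blast
    qed
    finally show ?thesis .
  qed simp
qed simp

lemma pile_down_hubs_le_1:
  assumes n: "2 \<le> n" and g: "locally_stuck n m g"
  shows "2 \<le> j \<Longrightarrow> j \<le> m \<Longrightarrow> pile_down g (n * m) (j * n) \<le> 1"
proof (induction "m - j" arbitrary: j)
  case 0
  then show ?case by (simp add: mult.commute)
next
  case (Suc k)
  then have j: "j < m" "k = m - Suc j" by auto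
  have IH: "pile_down g (n * m) (j * n + n) \<le> 1"
    using Suc.hyps(1)[OF j(2)] Suc.prems j by (simp add: add.commute)
  have "j * n < n * m" using j n by (simp add: mult.commute)
  then have "pile_down g (n * m) (j * n) = g (j * n) + pile_down g (n * m) (j * n + 1) div 2"
    by (simp add: pile_down_step)
  also have "\<dots> = g (j * n) + 0 + pass_left n g j"
    using pile_down_into_segment[OF n j(1) IH] by (simp add: pass_left_def)
  also have "\<dots> \<le> g (j * n) + pass_right n g (j - 1) + pass_left n g j" by simp
  also have "\<dots> \<le> 1"
  proof -
    have "j \<in> {2..<m}" using Suc.prems j by auto
    then show ?thesis using g unfolding locally_stuck_def by blast
  qed
  finally show ?case .
qed

lemma stuck_if_locally_stuck:
  assumes n: "2 \<le> n" and m: "3 \<le> m" and g: "locally_stuck n m (on_cycle D)"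
    and "D U = 0" "\<forall>i\<le>n. D (V i) = 0" "\<forall>i\<ge>n * m. D (V i) = 0"
  shows "stuck n m D"
proof -
  let ?g = "on_cycle D"
  have hubs: "hub_pile ?g n (n * m) h \<le> 1" if h: "n < h" "h < n * m" "n dvd h" for h
  proof -
    obtain j where hj: "h = j * n" using h(3) by (metis dvd_def mult.commute)
    then have j: "2 \<le> j" "j < m" using h n by (auto simp: mult.commute)
    then obtain i where i: "j = Suc i" "1 \<le> i" by (cases j) auto
    have "pile_up ?g n (h - 1) = pile_up ?g (i * n) (i * n + n - 1)"
      using pile_up_into_segment[OF n i(2) pile_up_hubs_le_1[OF n g i(2)]] hj i j
      by (simp add: add.commute)
    moreover have "pile_down ?g (n * m) (j * n + n) \<le> 1"
      using pile_down_hubs_le_1[OF n g, of "Suc j"] j by (simp add: add.commute)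
    then have "pile_down ?g (n * m) (h + 1) = pile_down ?g (j * n + n) (j * n + 1)"
      using pile_down_into_segment[OF n j(2)] hj by simp
    moreover have "?g (j * n) + pass_right n ?g (j - 1) + pass_left n ?g j \<le> 1"
      using g j unfolding locally_stuck_def by auto
    ultimately show ?thesis using hj i by (simp add: hub_pile_def pass_left_def pass_right_def)
  qed
  have mn: "n * m - 1 = (m - 1) * n + n - 1" using m by (cases m) (auto simp: algebra_simps)
  have "pile_up ?g n (n * m - 1) = pile_up ?g ((m - 1) * n) ((m - 1) * n + n - 1)"
    using pile_up_into_segment[OF n _ pile_up_hubs_le_1[OF n g]] m mn by simp
  then have last: "pile_up ?g n (n * m - 1) \<le> 1"
    using g unfolding locally_stuck_def pass_right_def by (simp add: div_eq_0_iff)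
  have "pile_down ?g (n * m) (1 * n + n) \<le> 1"
    using pile_down_hubs_le_1[OF n g, of 2] m by (simp add: mult_2)
  then have "pile_down ?g (n * m) (1 * n + 1) = pile_down ?g (1 * n + n) (1 * n + 1)"
    using pile_down_into_segment[OF n, of 1 m] m by simp
  then have first: "pile_down ?g (n * m) (n + 1) \<le> 1"
    using g unfolding locally_stuck_def pass_left_def by (simp add: div_eq_0_iff)
  show ?thesis unfolding stuck_def using hubs last first assms(4-6) by blast
qed

section \<open>The upper bound\<close>

lemma sum_blocks: "(\<Sum>i<n * m. g i) = (\<Sum>j<m. \<Sum>q<n. (g :: nat \<Rightarrow> nat) (j * n + q))"
proof -
  have "(\<Sum>i<m * n. g i) = (\<Sum>j<m. \<Sum>i\<in>{j * n..<j * n + n}. g i)" by (rule sum.nat_group[symmetric])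
  also have "\<dots> = (\<Sum>j<m. \<Sum>q<n. g (j * n + q))"
  proof (rule sum.cong)
    show "(\<Sum>i\<in>{a..<a + k}. g i) = (\<Sum>q<k. g (a + q))" for a k
      by (induction k) auto
  qed simp
  finally show ?thesis by (simp add: mult.commute)
qed

lemma dsize_eq_segments:
  assumes "2 \<le> n" "1 \<le> m" "D U = 0" "\<forall>i\<le>n. D (V i) = 0"
  shows "dsize n m D = (\<Sum>j\<in>{1..<m}. D (V (j * n)) + (\<Sum>q\<in>{1..<n}. D (V (j * n + q))))"
proof -
  have "dsize n m D = D U + (\<Sum>x\<in>V ` {..<n * m}. D x)"
    unfolding dsize_def jvertices_def by (subst sum.insert) auto
  also have "\<dots> = (\<Sum>j<m. \<Sum>q<n. D (V (j * n + q)))"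
    using assms(3) sum_blocks[of "\<lambda>i. D (V i)"] by (simp add: sum.reindex inj_on_def)
  also have "\<dots> = (\<Sum>j\<in>{1..<m}. \<Sum>q<n. D (V (j * n + q)))"
  proof -
    have "{..<m} = insert 0 {1..<m}" using assms(2) by auto
    then show ?thesis using assms(4) by simp
  qed
  also have "\<dots> = (\<Sum>j\<in>{1..<m}. D (V (j * n)) + (\<Sum>q\<in>{1..<n}. D (V (j * n + q))))"
  proof (rule sum.cong)
    have "{..<n} = insert 0 {1..<n}" using assms(1) by auto
    then show "(\<Sum>q<n. D (V (j * n + q))) = D (V (j * n)) + (\<Sum>q\<in>{1..<n}. D (V (j * n + q)))" for j
      by simp
  qed simp
  finally show ?thesis .
qed

lemma segment_le_fC_lin:
  assumes n: "2 \<le> n" and g: "locally_stuck n m g" and j: "j \<in> {1..<m}"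
  shows "(\<Sum>q\<in>{1..<n}. g (j * n + q)) \<le> fC_lin n (pass_left n g j + pass_right n g j)"
proof -
  note le_1 = locally_stuck_passes_le_1[OF g j]
  have "(\<Sum>q\<in>{1..<n}. g (j * n + q)) + 1 \<le> fC (n + pass_left n g j + pass_right n g j)"
    using le_1 by (intro segment_sum_bound[OF n]) (auto simp: pass_left_def pass_right_def)
  then show ?thesis using le_1 by (simp add: fC_lin_eq[OF n] add.assoc)
qed

lemma dsize_le_alpha:
  assumes n: "2 \<le> n" and m: "3 \<le> m" and g: "locally_stuck n m (on_cycle D)"
    and "D U = 0" "\<forall>i\<le>n. D (V i) = 0"
  shows "int (dsize n m D) \<le> alpha n m"
proof -
  let ?g = "on_cycle D"
  have "dsize n m D = (\<Sum>j\<in>{1..<m}. ?g (j * n) + (\<Sum>q\<in>{1..<n}. ?g (j * n + q)))"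
    using dsize_eq_segments[OF n _ assms(4,5)] m by (simp add: on_cycle_def)
  also have "\<dots> \<le> (m - 1) * (fC n - 1) + (fC (n + 1) - fC n) * (m - 2)
      + ((fC (n + 2) - fC (n + 1)) - (fC (n + 1) - fC n)) * ((m - 2) div 2)"
  proof (rule sum_segments_le[OF m])
    show "1 \<le> fC (n + 1) - fC n" "fC (n + 1) - fC n \<le> fC (n + 2) - fC (n + 1)"
      using fC_steps[OF n] by simp_all
    show "\<forall>j\<in>{1..<m}. (\<Sum>q\<in>{1..<n}. ?g (j * n + q)) \<le> fC n - 1
        + (fC (n + 1) - fC n) * (pass_left n ?g j + pass_right n ?g j)
        + (fC (n + 2) - fC (n + 1) - (fC (n + 1) - fC n)) * ((pass_left n ?g j + pass_right n ?g j) div 2)"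
      using segment_le_fC_lin[OF n g] by (simp add: fC_lin_def)
    show "\<forall>j\<in>{2..<m}. ?g (j * n) + pass_right n ?g (j - 1) + pass_left n ?g j \<le> 1"
      "pass_left n ?g 1 = 0" "pass_right n ?g (m - 1) = 0"
      using g unfolding locally_stuck_def by auto
    show "?g (1 * n) = 0" using assms(5) by (simp add: on_cycle_def)
  qed
  finally show ?thesis using alpha_eq_sum[OF n m] by linarith
qed

lemma good_dist_iff_locally_stuck:
  assumes n: "2 \<le> n" and m: "3 \<le> m"
  shows "good_dist n m D \<longleftrightarrow> is_distribution n m D \<and> D U = 0 \<and> (\<forall>i\<le>n. D (V i) = 0)
    \<and> locally_stuck n m (on_cycle D)"
proof
  assume D: "good_dist n m D"
  then have "D U = 0" unfolding good_dist_def reachable_def by fastforce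
  with D show "is_distribution n m D \<and> D U = 0 \<and> (\<forall>i\<le>n. D (V i) = 0) \<and> locally_stuck n m (on_cycle D)"
    using locally_stuck_if_not_reachable[OF n m] unfolding good_dist_def by blast
next
  assume D: "is_distribution n m D \<and> D U = 0 \<and> (\<forall>i\<le>n. D (V i) = 0) \<and> locally_stuck n m (on_cycle D)"
  have "\<forall>i\<ge>n * m. D (V i) = 0"
  proof (intro allI impI)
    fix i assume "n * m \<le> i"
    then have "V i \<notin> jvertices n m" unfolding jvertices_def by auto
    then show "D (V i) = 0" using D unfolding is_distribution_def by blast
  qed
  with D have "stuck n m D" using stuck_if_locally_stuck[OF n m] by blast
  with D show "good_dist n m D" unfolding good_dist_def using stuck_not_reachable by blast
qed

section \<open>Extremal distributions\<close>

lemma pile_up_spike: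
  assumes "1 \<le> p" "p \<le> r" "\<forall>q. 0 < q \<and> q \<le> r \<and> q \<noteq> p \<longrightarrow> e q = 0"
  shows "pile_up e 0 r = e p div 2 ^ (r - p)"
proof -
  have "pile_up e 0 (p - 1) = 0" by (rule pile_up_eq_0) (use assms in auto)
  then have "pile_up e 0 p = e p" using pile_up_Suc[of 0 "p - 1" e] assms(1) by simp
  moreover have "pile_up e 0 (p + (r - p)) = pile_up e 0 p div 2 ^ (r - p)"
    by (rule pile_up_over_zeros) (use assms in auto)
  ultimately show ?thesis using assms(2) by simp
qed

lemma pile_down_spike:
  assumes "1 \<le> l" "l \<le> p" "p < b" "\<forall>q. l \<le> q \<and> q < b \<and> q \<noteq> p \<longrightarrow> e q = 0"
  shows "pile_down e b l = e p div 2 ^ (p - l)"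
proof -
  have "pile_down e b (Suc p) = 0" by (rule pile_down_eq_0) (use assms in auto)
  then have "pile_down e b p = e p" using pile_down_step[of p b e] assms(3) by simp
  moreover have "pile_down e b l = pile_down e b (l + (p - l)) div 2 ^ (p - l)"
    by (rule pile_down_over_zeros) (use assms in auto)
  ultimately show ?thesis using assms(2) by simp
qed

lemma pile_up_double_spike:
  assumes "1 \<le> p" "p + 1 \<le> r" "\<forall>q. 0 < q \<and> q \<le> r \<and> q \<noteq> p \<and> q \<noteq> p + 1 \<longrightarrow> e q = 0"
    and "e p = t" "e (p + 1) = t"
  shows "pile_up e 0 r = (t + t div 2) div 2 ^ (r - p - 1)"
proof -
  have "pile_up e 0 (p - 1) = 0" by (rule pile_up_eq_0) (use assms in auto)
  then have "pile_up e 0 p = t" using pile_up_Suc[of 0 "p - 1" e] assms(1,4) by simp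
  then have "pile_up e 0 (p + 1) = t + t div 2" using pile_up_Suc[of 0 p e] assms(5) by simp
  moreover have "pile_up e 0 ((p + 1) + (r - p - 1)) = pile_up e 0 (p + 1) div 2 ^ (r - p - 1)"
    by (rule pile_up_over_zeros) (use assms in auto)
  ultimately show ?thesis using assms(2) by simp
qed

lemma pile_down_double_spike:
  assumes "1 \<le> l" "l \<le> p" "p + 1 < b" "\<forall>q. l \<le> q \<and> q < b \<and> q \<noteq> p \<and> q \<noteq> p + 1 \<longrightarrow> e q = 0"
    and "e p = t" "e (p + 1) = t"
  shows "pile_down e b l = (t + t div 2) div 2 ^ (p - l)"
proof -
  have "pile_down e b (Suc (Suc p)) = 0" by (rule pile_down_eq_0) (use assms in auto)
  then have "pile_down e b (Suc p) = t" using pile_down_step[of "Suc p" b e] assms(3,6) by simp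
  then have "pile_down e b p = t + t div 2" using pile_down_step[of p b e] assms(3,5) by simp
  moreover have "pile_down e b l = pile_down e b (l + (p - l)) div 2 ^ (p - l)"
    by (rule pile_down_over_zeros) (use assms in auto)
  ultimately show ?thesis using assms(2) by simp
qed

lemma div_pow2_div_2_le: "(v::nat) < 2 ^ (a + 1 + c) \<Longrightarrow> c \<le> 1 \<Longrightarrow> v div 2 ^ a div 2 \<le> c"
proof -
  assume v: "v < 2 ^ (a + 1 + c)" and c: "c \<le> 1"
  have "v div 2 ^ a div 2 = v div 2 ^ (a + 1)" by (simp only: power_add power_one_right div_mult2_eq)
  moreover have "v div 2 ^ (a + 1) < 2 ^ c"
    using v by (intro less_mult_imp_div_less) (simp add: power_add ac_simps)
  moreover have "(2::nat) ^ c = c + 1" using c by (cases c) auto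
  ultimately show ?thesis by simp
qed

lemma double_spike_lt: "(2 ^ (k + 1) div 3) + (2 ^ (k + 1) div 3) div 2 < (2::nat) ^ k"
proof -
  define t where "t = (2::nat) ^ (k + 1) div 3"
  have "3 * t \<le> 2 ^ (k + 1)" unfolding t_def by simp
  moreover have "3 * t \<noteq> 2 ^ (k + 1)"
    using pow2_mod_3[of "k + 1"] unfolding t_def by (metis mod_mult_self1_is_0 zero_neq_one zero_neq_numeral)
  ultimately have "3 * t < 2 * 2 ^ k" by simp
  then show ?thesis unfolding t_def[symmetric] by linarith
qed

text \<open>An inner path carrying \<open>f(C\<^sub>L) - 1\<close> pebbles, \<open>L = n + cl + cr\<close>: all of them sit
  in the middle of the virtual cycle, at distance \<open>\<lfloor>L/2\<rfloor>\<close> from the virtual vertex beyond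
  the left hub.\<close>

definition peak :: "nat \<Rightarrow> nat \<Rightarrow> nat \<Rightarrow> nat" where
  "peak L cl q = (if even L then (if q + cl = L div 2 then 2 ^ (L div 2) - 1 else 0)
     else (if q + cl = L div 2 \<or> q + cl = L div 2 + 1 then 2 ^ (L div 2 + 1) div 3 else 0))"

lemma peak_even:
  assumes n: "3 \<le> n" and cl: "cl \<le> 1" and cr: "cr \<le> 1" and L: "n + cl + cr = L" "L = 2 * k"
  shows "(\<Sum>q\<in>{1..<n}. peak L cl q) + 1 = fC L"
    and "pile_up (peak L cl) 0 (n - 1) div 2 \<le> cr"
    and "pile_down (peak L cl) n 1 div 2 \<le> cl"
proof -
  define p where "p = k - cl"
  define v where "v = (2::nat) ^ k - 1"
  have p: "1 \<le> p" "p < n" "n - p + cr = k" "p + cl = k" using n cl cr L unfolding p_def by auto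
  have e: "peak L cl q = (if q = p then v else 0)" for q
    unfolding peak_def v_def p_def using p L(2) by auto
  have v: "v < 2 ^ k" unfolding v_def by simp
  show "(\<Sum>q\<in>{1..<n}. peak L cl q) + 1 = fC L"
    using p L(2) unfolding e by (simp add: sum.delta fC_def v_def)
  have "pile_up (peak L cl) 0 (n - 1) = v div 2 ^ (n - 1 - p)"
    using pile_up_spike[of p "n - 1" "peak L cl"] p unfolding e by auto
  moreover have "v < 2 ^ (n - 1 - p + 1 + cr)" using v p by (simp add: Suc_diff_Suc)
  then have "v div 2 ^ (n - 1 - p) div 2 \<le> cr" using cr by (rule div_pow2_div_2_le)
  ultimately show "pile_up (peak L cl) 0 (n - 1) div 2 \<le> cr" by simp
  have "pile_down (peak L cl) n 1 = v div 2 ^ (p - 1)"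
    using pile_down_spike[of 1 p n "peak L cl"] p unfolding e by auto
  moreover have "v < 2 ^ (p - 1 + 1 + cl)" using v p by simp
  then have "v div 2 ^ (p - 1) div 2 \<le> cl" using cl by (rule div_pow2_div_2_le)
  ultimately show "pile_down (peak L cl) n 1 div 2 \<le> cl" by simp
qed

lemma peak_odd:
  assumes n: "3 \<le> n" and cl: "cl \<le> 1" and cr: "cr \<le> 1" and L: "n + cl + cr = L" "L = 2 * k + 1"
  shows "(\<Sum>q\<in>{1..<n}. peak L cl q) + 1 = fC L"
    and "pile_up (peak L cl) 0 (n - 1) div 2 \<le> cr"
    and "pile_down (peak L cl) n 1 div 2 \<le> cl"
proof -
  define p where "p = k - cl"
  define t where "t = (2::nat) ^ (k + 1) div 3"
  have p: "1 \<le> p" "p + 1 < n" "n - 1 - p + cr = k" "p + cl = k" using n cl cr L unfolding p_def by auto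
  have peak_eq: "peak L cl q = (if q = p \<or> q = p + 1 then t else 0)" for q
    unfolding peak_def t_def p_def using p L(2) by auto
  have w: "t + t div 2 < 2 ^ k" unfolding t_def by (rule double_spike_lt)
  have "(\<Sum>q\<in>{1..<n}. peak L cl q) = (\<Sum>q\<in>{1..<n}. (if q = p then t else 0) + (if q = p + 1 then t else 0))"
    unfolding peak_eq by (intro sum.cong) auto
  then show "(\<Sum>q\<in>{1..<n}. peak L cl q) + 1 = fC L"
    using p L(2) by (simp add: sum.distrib sum.delta fC_def t_def)
  have "pile_up (peak L cl) 0 (n - 1) = (t + t div 2) div 2 ^ (n - 1 - p - 1)"
    by (rule pile_up_double_spike) (use p(1,2) in \<open>auto simp: peak_eq\<close>)
  moreover have "t + t div 2 < 2 ^ (n - 1 - p - 1 + 1 + cr)" using w p by (simp add: Suc_diff_Suc)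
  then have "(t + t div 2) div 2 ^ (n - 1 - p - 1) div 2 \<le> cr" using cr by (rule div_pow2_div_2_le)
  ultimately show "pile_up (peak L cl) 0 (n - 1) div 2 \<le> cr" by simp
  have "pile_down (peak L cl) n 1 = (t + t div 2) div 2 ^ (p - 1)"
    by (rule pile_down_double_spike) (use p(1,2) in \<open>auto simp: peak_eq\<close>)
  moreover have "t + t div 2 < 2 ^ (p - 1 + 1 + cl)" using w p by simp
  then have "(t + t div 2) div 2 ^ (p - 1) div 2 \<le> cl" using cl by (rule div_pow2_div_2_le)
  ultimately show "pile_down (peak L cl) n 1 div 2 \<le> cl" by simp
qed

lemma peak_props:
  assumes "3 \<le> n" "cl \<le> 1" "cr \<le> 1"
  shows "(\<Sum>q\<in>{1..<n}. peak (n + cl + cr) cl q) + 1 = fC (n + cl + cr)"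
    and "pile_up (peak (n + cl + cr) cl) 0 (n - 1) div 2 \<le> cr"
    and "pile_down (peak (n + cl + cr) cl) n 1 div 2 \<le> cl"
proof -
  obtain k where k: "n + cl + cr = 2 * k \<or> n + cl + cr = 2 * k + 1" by (metis evenE oddE)
  note even = peak_even[OF assms refl, of k] and odd = peak_odd[OF assms refl, of k]
  show "(\<Sum>q\<in>{1..<n}. peak (n + cl + cr) cl q) + 1 = fC (n + cl + cr)"
    using k even(1) odd(1) by blast
  show "pile_up (peak (n + cl + cr) cl) 0 (n - 1) div 2 \<le> cr"
    using k even(2) odd(2) by blast
  show "pile_down (peak (n + cl + cr) cl) n 1 div 2 \<le> cl"
    using k even(3) odd(3) by blast
qed

text \<open>In the extremal distribution for \<open>n \<ge> 3\<close> the even segments pass one pebble to each hub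
  (except the last one, which must not reach \<open>v\<^sub>0\<close>) and the odd segments pass none.\<close>

definition share_left :: "nat \<Rightarrow> nat" where
  "share_left j = (if even j then 1 else 0)"

definition share_right :: "nat \<Rightarrow> nat \<Rightarrow> nat" where
  "share_right m j = (if even j \<and> j \<noteq> m - 1 then 1 else 0)"

definition extremal :: "nat \<Rightarrow> nat \<Rightarrow> jvert \<Rightarrow> nat" where
  "extremal n m x = (case x of U \<Rightarrow> 0 | V i \<Rightarrow>
     (if n < i \<and> i < n * m \<and> \<not> n dvd i
      then peak (n + share_left (i div n) + share_right m (i div n)) (share_left (i div n)) (i mod n)
      else 0))"

lemma extremal_segment:
  assumes "1 \<le> j" "j < m" "1 \<le> q" "q < n"
  shows "extremal n m (V (j * n + q)) = peak (n + share_left j + share_right m j) (share_left j) q"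
proof -
  have d: "(j * n + q) div n = j" "(j * n + q) mod n = q" using assms by auto
  have "n \<le> j * n" using assms by simp
  then have "n < j * n + q" using assms by linarith
  moreover have "(j + 1) * n \<le> m * n" using assms by (intro mult_le_mono1) simp
  then have "j * n + q < n * m" using assms by (simp add: algebra_simps)
  moreover have "\<not> n dvd j * n + q" using d(2) assms by (auto simp: dvd_eq_mod_eq_0)
  ultimately show ?thesis unfolding extremal_def using d by simp
qed

lemma extremal_hub: "extremal n m (V (j * n)) = 0"
  unfolding extremal_def by simp

lemma extremal_pass_le:
  assumes n: "3 \<le> n" and j: "j \<in> {1..<m}"
  shows "pass_left n (on_cycle (extremal n m)) j \<le> share_left j"
    and "pass_right n (on_cycle (extremal n m)) j \<le> share_right m j"
proof -
  let ?g = "on_cycle (extremal n m)" and ?p = "peak (n + share_left j + share_right m j) (share_left j)"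
  have seg: "?g (j * n + q) = ?p q" if "1 \<le> q" "q < n" for q
    using extremal_segment[of j m q n] that j by (simp add: on_cycle_def)
  have "pile_down ?g (j * n + n) (j * n + 1) = pile_down ?p n 1"
    unfolding pile_down_shift by (rule pile_down_cong) (use seg in auto)
  then show "pass_left n ?g j \<le> share_left j"
    using peak_props(3)[OF n] by (simp add: pass_left_def share_left_def share_right_def)
  have "pile_up ?g (j * n) (j * n + (n - 1)) = pile_up ?p 0 (n - 1)"
    unfolding pile_up_shift by (rule pile_up_cong) (use seg n in auto)
  then show "pass_right n ?g j \<le> share_right m j"
    using peak_props(2)[OF n] n by (simp add: pass_right_def share_left_def share_right_def)
qed

lemma share_hub: "j \<in> {2..<m} \<Longrightarrow> share_right m (j - 1) + share_left j = 1"
  unfolding share_left_def share_right_def by auto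

lemma extremal_locally_stuck:
  assumes n: "3 \<le> n" and m: "2 \<le> m"
  shows "locally_stuck n m (on_cycle (extremal n m))"
  unfolding locally_stuck_def
proof (intro conjI ballI)
  let ?g = "on_cycle (extremal n m)"
  fix j assume j: "j \<in> {2..<m}"
  then have "j - 1 \<in> {1..<m}" "j \<in> {1..<m}" by auto
  then have "pass_right n ?g (j - 1) \<le> share_right m (j - 1)" "pass_left n ?g j \<le> share_left j"
    using extremal_pass_le[OF n] by blast+
  moreover have "?g (j * n) = 0" by (simp add: on_cycle_def extremal_hub)
  ultimately show "?g (j * n) + pass_right n ?g (j - 1) + pass_left n ?g j \<le> 1"
    using share_hub[OF j] by linarith
next
  let ?g = "on_cycle (extremal n m)"
  have "1 \<in> {1..<m}" "m - 1 \<in> {1..<m}" using m by auto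
  then have "pass_left n ?g 1 \<le> share_left 1" "pass_right n ?g (m - 1) \<le> share_right m (m - 1)"
    using extremal_pass_le[OF n] by blast+
  then show "pass_left n ?g 1 = 0" "pass_right n ?g (m - 1) = 0"
    by (simp_all add: share_left_def share_right_def)
qed

lemma sum_share: "2 \<le> m \<Longrightarrow> (\<Sum>j\<in>{1..<m}. share_left j + share_right m j) = m - 2"
proof -
  assume m: "2 \<le> m"
  have "(\<Sum>j\<in>{1..<m}. share_left j) = (\<Sum>j\<in>{2..<m}. share_left j)"
  proof -
    have "{1..<m} = insert 1 {2..<m}" using m by auto
    then show ?thesis by (simp add: share_left_def)
  qed
  moreover have "(\<Sum>j\<in>{1..<m}. share_right m j) = (\<Sum>j\<in>{2..<m}. share_right m (j - 1))"
    using sum_shift_last[OF m, of "share_right m"] by (simp add: share_right_def)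
  ultimately have "(\<Sum>j\<in>{1..<m}. share_left j + share_right m j)
      = (\<Sum>j\<in>{2..<m}. share_right m (j - 1) + share_left j)"
    by (simp add: sum.distrib add.commute)
  also have "\<dots> = (\<Sum>j\<in>{2..<m}. 1)" using share_hub by (intro sum.cong) auto
  finally show ?thesis by simp
qed

lemma sum_even_indicator: "(\<Sum>j\<in>{1..<M}. if even j then 1 else 0 :: nat) = (M - 1) div 2"
proof (induction M)
  case (Suc M)
  then show ?case by (cases "M = 0") (auto elim!: evenE oddE)
qed simp

lemma sum_share_div_2: "2 \<le> m \<Longrightarrow> (\<Sum>j\<in>{1..<m}. (share_left j + share_right m j) div 2) = (m - 2) div 2"
proof -
  assume m: "2 \<le> m"
  have "(\<Sum>j\<in>{1..<m}. (share_left j + share_right m j) div 2)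
      = (\<Sum>j\<in>{1..<m - 1}. if even j then 1 else 0)"
  proof -
    have "{1..<m} = insert (m - 1) {1..<m - 1}" using m by auto
    then show ?thesis by (simp add: share_left_def share_right_def)
  qed
  also have "\<dots> = (m - 2) div 2" using sum_even_indicator[of "m - 1"] by simp
  finally show ?thesis .
qed

lemma extremal_dsize:
  assumes n: "3 \<le> n" and m: "3 \<le> m"
  shows "int (dsize n m (extremal n m)) = alpha n m"
proof -
  define c where "c j = share_left j + share_right m j" for j
  have shares: "share_left j \<le> 1" "share_right m j \<le> 1" for j
    by (simp_all add: share_left_def share_right_def)
  have "dsize n m (extremal n m)
      = (\<Sum>j\<in>{1..<m}. extremal n m (V (j * n)) + (\<Sum>q\<in>{1..<n}. extremal n m (V (j * n + q))))"
    using n m by (intro dsize_eq_segments) (simp_all add: extremal_def)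
  also have "\<dots> = (\<Sum>j\<in>{1..<m}. fC_lin n (c j))"
  proof (rule sum.cong)
    fix j assume j: "j \<in> {1..<m}"
    have "(\<Sum>q\<in>{1..<n}. extremal n m (V (j * n + q)))
        = (\<Sum>q\<in>{1..<n}. peak (n + share_left j + share_right m j) (share_left j) q)"
      using j by (intro sum.cong) (simp_all add: extremal_segment)
    also have "\<dots> = fC (n + c j) - 1"
      using peak_props(1)[OF n shares(1)[of j] shares(2)[of j]] unfolding c_def add.assoc by linarith
    also have "\<dots> = fC_lin n (c j)" using n shares[of j] by (simp add: fC_lin_eq c_def)
    finally show "extremal n m (V (j * n)) + (\<Sum>q\<in>{1..<n}. extremal n m (V (j * n + q))) = fC_lin n (c j)"
      by (simp add: extremal_hub)
  qed simp
  also have "\<dots> = (m - 1) * (fC n - 1) + (fC (n + 1) - fC n) * (\<Sum>j\<in>{1..<m}. c j)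
      + ((fC (n + 2) - fC (n + 1)) - (fC (n + 1) - fC n)) * (\<Sum>j\<in>{1..<m}. c j div 2)"
    unfolding fC_lin_def sum_distrib_left by (simp only: sum.distrib) simp
  also have "\<dots> = (m - 1) * (fC n - 1) + (fC (n + 1) - fC n) * (m - 2)
      + ((fC (n + 2) - fC (n + 1)) - (fC (n + 1) - fC n)) * ((m - 2) div 2)"
    using sum_share[of m] sum_share_div_2[of m] m by (simp add: c_def)
  finally show ?thesis using alpha_eq_sum[OF _ m] n by simp
qed

text \<open>For \<open>n = 2\<close> the inner paths are single vertices, and the extremal distribution
  instead puts one pebble on every vertex from \<open>v\<^sub>3\<close> on, hubs included.\<close>

definition extremal_2 :: "nat \<Rightarrow> jvert \<Rightarrow> nat" where
  "extremal_2 m x = (case x of U \<Rightarrow> 0 | V i \<Rightarrow> (if 2 < i \<and> i < 2 * m then 1 else 0))"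

lemma extremal_2_locally_stuck: "locally_stuck 2 m (on_cycle (extremal_2 m))"
proof -
  let ?g = "on_cycle (extremal_2 m)"
  have le_1: "?g i \<le> 1" for i by (simp add: on_cycle_def extremal_2_def)
  have "pass_left 2 ?g j = 0" for j
    using le_1[of "j * 2 + 1"] pile_down_step[of "j * 2 + 1" "j * 2 + 2" ?g]
    by (simp add: pass_left_def)
  moreover have "pass_right 2 ?g j = 0" for j
    using le_1[of "j * 2 + 1"] pile_up_Suc[of "j * 2" "j * 2" ?g]
    by (simp add: pass_right_def)
  ultimately show ?thesis unfolding locally_stuck_def using le_1 by simp
qed

lemma extremal_2_dsize:
  assumes m: "3 \<le> m"
  shows "int (dsize 2 m (extremal_2 m)) = alpha 2 m"
proof -
  have "dsize 2 m (extremal_2 m)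
      = (\<Sum>j\<in>{1..<m}. extremal_2 m (V (j * 2)) + (\<Sum>q\<in>{1..<2}. extremal_2 m (V (j * 2 + q))))"
    using m by (intro dsize_eq_segments) (simp_all add: extremal_2_def)
  also have "\<dots> = (\<Sum>j\<in>{1..<m}. (if 2 \<le> j then 1 else 0) + 1)"
    by (rule sum.cong) (auto simp: extremal_2_def)
  also have "\<dots> = (m - 2) + (m - 1)"
  proof -
    have "{1..<m} = insert 1 {2..<m}" using m by auto
    then show ?thesis using m by (simp add: sum.distrib)
  qed
  also have "\<dots> = (m - 1) * (fC 2 - 1) + (fC (2 + 1) - fC 2) * (m - 2)
      + ((fC (2 + 2) - fC (2 + 1)) - (fC (2 + 1) - fC 2)) * ((m - 2) div 2)"
    by (simp add: fC_def)
  finally show ?thesis using alpha_eq_sum[OF _ m, of 2] by simp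
qed

theorem lemma2p9:
  fixes n m :: nat
  assumes "n \<ge> 2" and "m \<ge> 8"
  shows "(\<forall>D. good_dist n m D \<longrightarrow> int (dsize n m D) \<le> alpha n m)
       \<and> (\<exists>D. good_dist n m D \<and> int (dsize n m D) = alpha n m)"
proof
  have n: "2 \<le> n" and m: "3 \<le> m" using assms by simp_all
  note good_iff = good_dist_iff_locally_stuck[OF n m]
  show "\<forall>D. good_dist n m D \<longrightarrow> int (dsize n m D) \<le> alpha n m"
    using dsize_le_alpha[OF n m] good_iff by blast
  show "\<exists>D. good_dist n m D \<and> int (dsize n m D) = alpha n m"
  proof (cases "n = 2")
    case True
    have "good_dist 2 m (extremal_2 m)"
      using good_iff extremal_2_locally_stuck True
      by (auto simp: is_distribution_def jvertices_def extremal_2_def split: jvert.split)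
    then show ?thesis using extremal_2_dsize[OF m] True by blast
  next
    case False
    then have n3: "3 \<le> n" using n by simp
    have "good_dist n m (extremal n m)"
      using good_iff extremal_locally_stuck[OF n3] m
      by (auto simp: is_distribution_def jvertices_def extremal_def split: jvert.split)
    then show ?thesis using extremal_dsize[OF n3 m] by blast
  qed
qed

end
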